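(* There is a constant $C$ such that the following holds. Let $k_1,k_2,k_3\in\mathbb{Z}$, $j_1,j_2,j_3\in\mathbb{Z}_+$, and let $f_{k_i,j_i}\in L^2(\mathbb{R}^2)$ be supported in $D_{k_i,j_i}$, $i=1,2$. Then: (a) $\|\mathbf{1}_{D_{k_3,j_3}}(f_{k_1,j_1}\ast f_{k_2,j_2})\|_{L^2}\leq C2^{\min(k_1,k_2,k_3)/2}2^{\min(j_1,j_2,j_3)/2}\prod_{i=1}^2\|f_{k_i,j_i}\|_{L^2}$. (b) If $\max(k_1,k_2,k_3)\geq\min(k_1,k_2,k_3)+5$ and $i\in\{1,2,3\}$, then $\|\mathbf{1}_{D_{k_3,j_3}}(f_{k_1,j_1}\ast f_{k_2,j_2})\|_{L^2}\leq C2^{(j_1+j_2+j_3)/2}2^{-(j_i+k_i)/2}\prod_{l=1}^2\|f_{k_l,j_l}\|_{L^2}$. (c) $\|\mathbf{1}_{D_{k_3,j_3}}(f_{k_1,j_1}\ast f_{k_2,j_2})\|_{L^2}\leq C2^{\min(j_1,j_2,j_3)/2+\mathrm{med}(j_1,j_2,j_3)/4}\prod_{i=1}^2\|f_{k_i,j_i}\|_{L^2}$. (d) Moreover $\mathbf{1}_{D_{k_3,j_3}}(f_{k_1,j_1}\ast f_{k_2,j_2})\equiv0$ unless $\max(k_1,k_2,k_3)\leq\mathrm{med}(k_1,k_2,k_3)+2$ and either $\max(j_1,j_2,j_3)\in[\widetilde k-8,\widetilde k+8]$, or $\max(j_1,j_2,j_3)\geq\widetilde k+8$ and $\max(j_1,j_2,j_3)-\mathrm{med}(j_1,j_2,j_3)\leq10$,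 where $\widetilde k=\min(k_1,k_2,k_3)+\mathrm{med}(k_1,k_2,k_3)$.
   Context: $\omega(\xi)=-\xi|\xi|$. For $l\in\mathbb{Z}$, $I_l=\{\xi:|\xi|\in[2^{l-1},2^{l+1}]\}$; $\widetilde I_0=[-2,2]$ and $\widetilde I_l=I_l$ for $l\ge1$. For $k\in\mathbb{Z}$, $j\in\mathbb{Z}_+$: $D_{k,j}=\{(\xi,\tau):\xi\in I_k,\ \tau-\omega(\xi)\in\widetilde I_j\}$ if $k\ge1$ and $D_{k,j}=\{(\xi,\tau):\xi\in I_k,\ \tau\in\widetilde I_j\}$ if $k\le0$. $\ast$ is convolution on $\mathbb{R}^2$ in $(\xi,\tau)$; $\mathbf{1}_D$ is the indicator of $D$. $\mathrm{med}$ denotes the median of three numbers. *)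

theory Defs
  imports "HOL-Analysis.Analysis"
begin

definition omega :: "real \<Rightarrow> real" where
  "omega \<xi> = - \<xi> * \<bar>\<xi>\<bar>"

definition Iset :: "int \<Rightarrow> real set" where
  "Iset l = {\<xi>. 2 powr (real_of_int l - 1) \<le> \<bar>\<xi>\<bar> \<and> \<bar>\<xi>\<bar> \<le> 2 powr (real_of_int l + 1)}"

definition Itil :: "nat \<Rightarrow> real set" where
  "Itil l = (if l = 0 then {-2..2} else Iset (int l))"

definition Dset :: "int \<Rightarrow> nat \<Rightarrow> (real \<times> real) set" where
  "Dset k j = (if k \<ge> 1
     then {(\<xi>, \<tau>). \<xi> \<in> Iset k \<and> \<tau> - omega \<xi> \<in> Itil j}
     else {(\<xi>, \<tau>). \<xi> \<in> Iset k \<and> \<tau> \<in> Itil j})"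

definition conv2 :: "(real \<times> real \<Rightarrow> complex) \<Rightarrow> (real \<times> real \<Rightarrow> complex) \<Rightarrow> real \<times> real \<Rightarrow> complex" where
  "conv2 f g x = (\<integral> y. f y * g (x - y) \<partial>lebesgue)"

definition L2norm :: "(real \<times> real \<Rightarrow> complex) \<Rightarrow> real" where
  "L2norm f = sqrt (\<integral> x. (cmod (f x))\<^sup>2 \<partial>lebesgue)"

definition is_L2 :: "(real \<times> real \<Rightarrow> complex) \<Rightarrow> bool" where
  "is_L2 f \<longleftrightarrow> f \<in> borel_measurable lebesgue \<and> integrable lebesgue (\<lambda>x. (cmod (f x))\<^sup>2)"

definition med3 :: "'a::linorder \<Rightarrow> 'a \<Rightarrow> 'a \<Rightarrow> 'a" where
  "med3 a b c = max (min a b) (min (max a b) c)"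

end

(* The estimates come from Cauchy-Schwarz: the restriction to E of u * v, with u and v supported in
   A and B, has squared L^2 norm at most M |u|^2 |v|^2 as soon as the fibers {y in A. w + y in B}
   over the points w of E have measure at most M; when the sets are symmetric under x -> -x, the
   fibers over the points of A or of B serve as well.  For the neighbourhoods
   {(xi, tau). xi in I_k, |tau - omega xi| <= R} of the dyadic pieces of the parabola, the fiber over
   (xi, tau) has measure at most 2 min R_a R_b times that of the set of frequencies s with
   |omega s - omega (s + xi) + tau| <= W = R_a + R_b.  As a function of s this is affine with slope
   +-2 xi away from the sign changes and quadratic in between, so the set has measure
   O(W / |xi| + sqrt W), and O(W / |xi|) where ||s + xi| - |s|| stays comparable to |xi|, which is
   the case once the three frequency scales are separated.  Choosing the variable to fiber over
   gives (a)-(c).  For (d), the modulations tau_i - omega xi_i add up to the resonance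
   omega xi_1 + omega xi_2 - omega (xi_1 + xi_2), whose size is 2^(k_min + k_med); and if one
   frequency scale dominates the other two, xi_1 + xi_2 = xi_3 pushes a frequency onto the boundary
   of its annulus, which is a null set. *)

theory Submission
  imports Defs
begin

section \<open>Restricted convolutions of nonnegative functions\<close>

lemma lborel_distr_minus:
  fixes c :: "'a::euclidean_space"
  shows "distr lborel borel ((-) c) = lborel"
proof -
  have "lborel = distr lborel borel (\<lambda>x. c + (-1::real) *\<^sub>R x)"
    using lborel_affine[of "-1" c] by (simp add: density_1)
  then show ?thesis by simp
qed

lemma nn_integral_lborel_translate:
  fixes g :: "'a::euclidean_space \<Rightarrow> ennreal"
  assumes [measurable]: "g \<in> borel_measurable borel"
  shows "(\<integral>\<^sup>+x. g (x + c) \<partial>lborel) = (\<integral>\<^sup>+x. g x \<partial>lborel)"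
  by (subst (2) lborel_distr_plus[of c, symmetric]) (simp add: nn_integral_distr add.commute)

lemma nn_integral_lborel_reflect:
  fixes g :: "'a::euclidean_space \<Rightarrow> ennreal"
  assumes [measurable]: "g \<in> borel_measurable borel"
  shows "(\<integral>\<^sup>+y. g (c - y) \<partial>lborel) = (\<integral>\<^sup>+x. g x \<partial>lborel)"
  by (subst (2) lborel_distr_minus[of c, symmetric]) (simp add: nn_integral_distr)

lemma AE_lborel_reflect:
  fixes c :: "'a::euclidean_space"
  assumes "AE z in lborel. P z"
  shows "AE y in lborel. P (c - y)"
proof (rule AE_distrD[of "(-) c" lborel borel])
  show "AE y in distr lborel borel ((-) c). P y"
    unfolding lborel_distr_minus by (fact assms)
qed simp

definition nn_conv :: "('a::euclidean_space \<Rightarrow> ennreal) \<Rightarrow> ('a \<Rightarrow> ennreal) \<Rightarrow> 'a \<Rightarrow> ennreal" where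
  "nn_conv u v x = (\<integral>\<^sup>+y. u y * v (x - y) \<partial>lborel)"

lemma nn_conv_commute:
  assumes [measurable]: "u \<in> borel_measurable borel" "v \<in> borel_measurable borel"
  shows "nn_conv u v x = nn_conv v u x"
  unfolding nn_conv_def
  by (subst nn_integral_lborel_reflect[of "\<lambda>y. u y * v (x - y)" x, symmetric]) (simp_all add: mult.commute)

definition conv_L2_bounded :: "'a::euclidean_space set \<Rightarrow> 'a set \<Rightarrow> 'a set \<Rightarrow> real \<Rightarrow> bool" where
  "conv_L2_bounded A B E M \<longleftrightarrow>
     (\<forall>u \<in> borel_measurable borel. \<forall>v \<in> borel_measurable borel.
       (\<forall>y. y \<notin> A \<longrightarrow> u y = 0) \<longrightarrow> (\<forall>z. z \<notin> B \<longrightarrow> v z = 0) \<longrightarrow>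
       (\<integral>\<^sup>+x. indicator E x * (nn_conv u v x)\<^sup>2 \<partial>lborel)
         \<le> ennreal M * (\<integral>\<^sup>+y. (u y)\<^sup>2 \<partial>lborel) * (\<integral>\<^sup>+z. (v z)\<^sup>2 \<partial>lborel))"

lemma conv_L2_bounded_mono: "conv_L2_bounded A B E M \<Longrightarrow> M \<le> M' \<Longrightarrow> conv_L2_bounded A B E M'"
  unfolding conv_L2_bounded_def by (meson order_trans mult_right_mono ennreal_leI zero_le)

lemma conv_L2_bounded_swap:
  assumes "conv_L2_bounded A B E M"
  shows "conv_L2_bounded B A E M"
  unfolding conv_L2_bounded_def
proof (intro ballI impI)
  fix u v :: "'a \<Rightarrow> ennreal"
  assume uv: "u \<in> borel_measurable borel" "v \<in> borel_measurable borel"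
    "\<forall>y. y \<notin> B \<longrightarrow> u y = 0" "\<forall>z. z \<notin> A \<longrightarrow> v z = 0"
  have "(\<integral>\<^sup>+x. indicator E x * (nn_conv v u x)\<^sup>2 \<partial>lborel)
      \<le> ennreal M * (\<integral>\<^sup>+y. (v y)\<^sup>2 \<partial>lborel) * (\<integral>\<^sup>+z. (u z)\<^sup>2 \<partial>lborel)"
    using assms uv unfolding conv_L2_bounded_def by blast
  then show "(\<integral>\<^sup>+x. indicator E x * (nn_conv u v x)\<^sup>2 \<partial>lborel)
      \<le> ennreal M * (\<integral>\<^sup>+y. (u y)\<^sup>2 \<partial>lborel) * (\<integral>\<^sup>+z. (v z)\<^sup>2 \<partial>lborel)"
    by (simp add: nn_conv_commute[OF uv(1,2)] mult_ac)
qed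

lemma indicator_power2_ennreal: "(indicator S x :: ennreal)\<^sup>2 = indicator S x"
  by (simp split: split_indicator)

lemma nn_conv_borel [measurable]:
  assumes [measurable]: "u \<in> borel_measurable borel" "v \<in> borel_measurable borel"
  shows "nn_conv u v \<in> borel_measurable borel"
  unfolding nn_conv_def[abs_def] by measurable

lemma nn_integral_nn_conv:
  assumes [measurable]: "f \<in> borel_measurable borel" "g \<in> borel_measurable borel"
  shows "(\<integral>\<^sup>+x. nn_conv f g x \<partial>lborel) = (\<integral>\<^sup>+y. f y \<partial>lborel) * (\<integral>\<^sup>+z. g z \<partial>lborel)"
proof -
  have "(\<integral>\<^sup>+x. nn_conv f g x \<partial>lborel) = (\<integral>\<^sup>+y. (\<integral>\<^sup>+x. f y * g (x - y) \<partial>lborel) \<partial>lborel)"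
    unfolding nn_conv_def by (subst lborel_pair.Fubini') simp_all
  also have "\<dots> = (\<integral>\<^sup>+y. f y * (\<integral>\<^sup>+z. g z \<partial>lborel) \<partial>lborel)"
    using nn_integral_lborel_translate[of g "- y" for y] by (simp add: nn_integral_cmult)
  also have "\<dots> = (\<integral>\<^sup>+y. f y \<partial>lborel) * (\<integral>\<^sup>+z. g z \<partial>lborel)"
    by (rule nn_integral_multc) simp
  finally show ?thesis .
qed

lemma nn_integral_indicator_nn_conv_indicator:
  fixes A E :: "'a::euclidean_space set"
  assumes [measurable]: "A \<in> sets borel" "E \<in> sets borel" "g \<in> borel_measurable borel"
  shows "(\<integral>\<^sup>+x. indicator E x * nn_conv (indicator A) g x \<partial>lborel)
    = (\<integral>\<^sup>+z. g z * emeasure lborel {y \<in> A. z + y \<in> E} \<partial>lborel)"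
proof -
  have "(\<integral>\<^sup>+x. indicator E x * nn_conv (indicator A) g x \<partial>lborel)
      = (\<integral>\<^sup>+y. (\<integral>\<^sup>+x. indicator A y * indicator E x * g (x - y) \<partial>lborel) \<partial>lborel)"
    unfolding nn_conv_def
    by (subst lborel_pair.Fubini'[symmetric]) (simp_all add: nn_integral_cmult[symmetric] mult_ac)
  also have "\<dots> = (\<integral>\<^sup>+y. (\<integral>\<^sup>+z. indicator A y * indicator E (z + y) * g z \<partial>lborel) \<partial>lborel)"
    using nn_integral_lborel_translate[of "\<lambda>z. indicator A y * indicator E (z + y) * g z" "- y" for y]
    by simp
  also have "\<dots> = (\<integral>\<^sup>+z. (\<integral>\<^sup>+y. indicator A y * indicator E (z + y) * g z \<partial>lborel) \<partial>lborel)"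
    by (subst lborel_pair.Fubini'[symmetric]) simp_all
  also have "\<dots> = (\<integral>\<^sup>+z. g z * emeasure lborel {y \<in> A. z + y \<in> E} \<partial>lborel)"
    by (intro nn_integral_cong, subst nn_integral_cmult_indicator[symmetric], measurable)
      (rule nn_integral_cong, simp split: split_indicator)
  finally show ?thesis .
qed

lemma conv_L2_bounded_fibers_over_target:
  fixes A B E :: "'a::euclidean_space set"
  assumes [measurable]: "A \<in> sets borel" "B \<in> sets borel" "E \<in> sets borel"
    and fiber: "\<And>x. x \<in> E \<Longrightarrow> emeasure lborel {y \<in> A. x - y \<in> B} \<le> ennreal M"
  shows "conv_L2_bounded A B E M"
  unfolding conv_L2_bounded_def
proof (intro ballI impI)
  fix u v :: "'a \<Rightarrow> ennreal"
  assume [measurable]: "u \<in> borel_measurable borel" "v \<in> borel_measurable borel"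
    and uA: "\<forall>y. y \<notin> A \<longrightarrow> u y = 0" and vB: "\<forall>z. z \<notin> B \<longrightarrow> v z = 0"
  let ?uv = "nn_conv (\<lambda>y. (u y)\<^sup>2) (\<lambda>z. (v z)\<^sup>2)"
  have "(nn_conv u v x)\<^sup>2 \<le> ?uv x * emeasure lborel {y \<in> A. x - y \<in> B}" for x
  proof -
    have "nn_conv u v x = (\<integral>\<^sup>+y. (u y * v (x - y)) * indicator {y \<in> A. x - y \<in> B} y \<partial>lborel)"
      unfolding nn_conv_def by (rule nn_integral_cong) (use uA vB in \<open>auto split: split_indicator\<close>)
    then show ?thesis
      using Cauchy_Schwarz_nn_integral[of "\<lambda>y. u y * v (x - y)" lborel "indicator {y \<in> A. x - y \<in> B}"]
      by (simp add: nn_conv_def indicator_power2_ennreal power_mult_distrib)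
  qed
  then have "indicator E x * (nn_conv u v x)\<^sup>2 \<le> ennreal M * ?uv x" for x
  proof (cases "x \<in> E")
    case True
    have "(nn_conv u v x)\<^sup>2 \<le> ?uv x * emeasure lborel {y \<in> A. x - y \<in> B}" by fact
    also have "\<dots> \<le> ?uv x * ennreal M"
      using fiber[OF True] by (rule mult_left_mono) simp
    finally show ?thesis
      using True by (simp add: mult.commute)
  qed simp
  then have "(\<integral>\<^sup>+x. indicator E x * (nn_conv u v x)\<^sup>2 \<partial>lborel) \<le> (\<integral>\<^sup>+x. ennreal M * ?uv x \<partial>lborel)"
    by (rule nn_integral_mono)
  also have "\<dots> = ennreal M * (\<integral>\<^sup>+y. (u y)\<^sup>2 \<partial>lborel) * (\<integral>\<^sup>+z. (v z)\<^sup>2 \<partial>lborel)"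
    by (simp add: nn_integral_cmult nn_integral_nn_conv mult.assoc)
  finally show "(\<integral>\<^sup>+x. indicator E x * (nn_conv u v x)\<^sup>2 \<partial>lborel)
      \<le> ennreal M * (\<integral>\<^sup>+y. (u y)\<^sup>2 \<partial>lborel) * (\<integral>\<^sup>+z. (v z)\<^sup>2 \<partial>lborel)" .
qed

lemma conv_L2_bounded_fibers_over_right:
  fixes A B E :: "'a::euclidean_space set"
  assumes [measurable]: "A \<in> sets borel" "B \<in> sets borel" "E \<in> sets borel"
    and fiber: "\<And>z. z \<in> B \<Longrightarrow> emeasure lborel {y \<in> A. z + y \<in> E} \<le> ennreal M"
  shows "conv_L2_bounded A B E M"
  unfolding conv_L2_bounded_def
proof (intro ballI impI)
  fix u v :: "'a \<Rightarrow> ennreal"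
  assume [measurable]: "u \<in> borel_measurable borel" "v \<in> borel_measurable borel"
    and uA: "\<forall>y. y \<notin> A \<longrightarrow> u y = 0" and vB: "\<forall>z. z \<notin> B \<longrightarrow> v z = 0"
  define U where "U = (\<integral>\<^sup>+y. (u y)\<^sup>2 \<partial>lborel)"
  let ?Av = "nn_conv (indicator A) (\<lambda>z. (v z)\<^sup>2)"
  have "(nn_conv u v x)\<^sup>2 \<le> U * ?Av x" for x
  proof -
    have "nn_conv u v x = (\<integral>\<^sup>+y. u y * (indicator A y * v (x - y)) \<partial>lborel)"
      unfolding nn_conv_def by (rule nn_integral_cong) (use uA in \<open>auto split: split_indicator\<close>)
    then show ?thesis
      using Cauchy_Schwarz_nn_integral[of u lborel "\<lambda>y. indicator A y * v (x - y)"]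
      by (simp add: U_def nn_conv_def indicator_power2_ennreal power_mult_distrib)
  qed
  then have "(\<integral>\<^sup>+x. indicator E x * (nn_conv u v x)\<^sup>2 \<partial>lborel) \<le> (\<integral>\<^sup>+x. U * (indicator E x * ?Av x) \<partial>lborel)"
    by (intro nn_integral_mono) (simp add: mult.left_commute mult_left_mono split: split_indicator)
  also have "\<dots> = U * (\<integral>\<^sup>+z. (v z)\<^sup>2 * emeasure lborel {y \<in> A. z + y \<in> E} \<partial>lborel)"
    by (simp add: nn_integral_cmult nn_integral_indicator_nn_conv_indicator)
  also have "\<dots> \<le> U * (\<integral>\<^sup>+z. (v z)\<^sup>2 * ennreal M \<partial>lborel)"
  proof (rule mult_left_mono[OF nn_integral_mono])
    fix z
    show "(v z)\<^sup>2 * emeasure lborel {y \<in> A. z + y \<in> E} \<le> (v z)\<^sup>2 * ennreal M"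
      using fiber[of z] vB by (cases "z \<in> B") (simp_all add: mult_left_mono)
  qed simp
  also have "\<dots> = U * (\<integral>\<^sup>+z. (v z)\<^sup>2 \<partial>lborel) * ennreal M"
    by (simp add: nn_integral_multc mult.assoc)
  finally show "(\<integral>\<^sup>+x. indicator E x * (nn_conv u v x)\<^sup>2 \<partial>lborel)
      \<le> ennreal M * (\<integral>\<^sup>+y. (u y)\<^sup>2 \<partial>lborel) * (\<integral>\<^sup>+z. (v z)\<^sup>2 \<partial>lborel)"
    by (simp add: U_def mult_ac)
qed

lemma conv_L2_bounded_if_fibers:
  fixes A B E :: "'a::euclidean_space set"
  assumes borel: "A \<in> sets borel" "B \<in> sets borel" "E \<in> sets borel"
    and symm: "\<And>x. x \<in> B \<Longrightarrow> - x \<in> B" "\<And>x. x \<in> E \<Longrightarrow> - x \<in> E"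
    and RPQ: "(R, P, Q) \<in> {(E, A, B), (B, A, E), (A, B, E)}"
    and fiber: "\<And>w. w \<in> R \<Longrightarrow> emeasure lborel {y \<in> P. w + y \<in> Q} \<le> ennreal M"
  shows "conv_L2_bounded A B E M"
proof -
  consider "R = E" "P = A" "Q = B" | "R = B" "P = A" "Q = E" | "R = A" "P = B" "Q = E"
    using RPQ by blast
  then show ?thesis
  proof cases
    case 1
    show ?thesis
    proof (rule conv_L2_bounded_fibers_over_target[OF borel])
      fix x assume "x \<in> E"
      have "x - y \<in> B \<longleftrightarrow> - x + y \<in> B" for y
        using symm(1)[of "x - y"] symm(1)[of "- x + y"] by auto
      then have "{y \<in> A. x - y \<in> B} = {y \<in> A. - x + y \<in> B}" by blast
      also have "emeasure lborel \<dots> \<le> ennreal M"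
        using fiber[of "- x"] symm(2)[OF \<open>x \<in> E\<close>] 1 by simp
      finally show "emeasure lborel {y \<in> A. x - y \<in> B} \<le> ennreal M" .
    qed
  next
    case 2
    show ?thesis
      by (rule conv_L2_bounded_fibers_over_right[OF borel]) (use fiber 2 in simp)
  next
    case 3
    show ?thesis
      by (rule conv_L2_bounded_swap, rule conv_L2_bounded_fibers_over_right[OF borel(2,1,3)])
        (use fiber 3 in simp)
  qed
qed

section \<open>Restricted convolutions of square integrable functions\<close>

lemma borel_modulus_ae:
  fixes f :: "'a::euclidean_space \<Rightarrow> complex"
  assumes "f \<in> borel_measurable lebesgue" and [measurable]: "A \<in> sets borel"
    and supp: "\<forall>x. x \<notin> A \<longrightarrow> f x = 0"
  obtains u where "u \<in> borel_measurable borel" "\<forall>x. x \<notin> A \<longrightarrow> u x = 0"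
    "AE x in lborel. ennreal (cmod (f x)) = u x"
proof -
  have "(\<lambda>x. ennreal (cmod (f x))) \<in> borel_measurable (completion lborel)"
    using assms(1) by measurable
  then obtain g where g: "g \<in> borel_measurable lborel" "AE x in lborel. ennreal (cmod (f x)) = g x"
    by (blast dest: completion_ex_borel_measurable)
  show ?thesis
  proof (rule that[of "\<lambda>x. g x * indicator A x"])
    show "(\<lambda>x. g x * indicator A x) \<in> borel_measurable borel"
      using g(1) by (simp add: measurable_lborel1)
    show "AE x in lborel. ennreal (cmod (f x)) = g x * indicator A x"
      using g(2) by eventually_elim (use supp in \<open>auto split: split_indicator\<close>)
  qed simp
qed

lemma conv2_modulus_le_nn_conv:
  fixes f1 f2 :: "real \<times> real \<Rightarrow> complex"
  assumes [measurable]: "u \<in> borel_measurable borel" "v \<in> borel_measurable borel"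
    and u: "AE x in lborel. ennreal (cmod (f1 x)) = u x"
    and v: "AE x in lborel. ennreal (cmod (f2 x)) = v x"
  shows "ennreal (cmod (conv2 f1 f2 x)) \<le> nn_conv u v x"
proof (cases "integrable lebesgue (\<lambda>y. f1 y * f2 (x - y))")
  case True
  have "nn_conv u v x = (\<integral>\<^sup>+y. ennreal (cmod (f1 y * f2 (x - y))) \<partial>lborel)"
    unfolding nn_conv_def using u AE_lborel_reflect[OF v, of x]
    by (intro nn_integral_cong_AE) (auto simp: norm_mult ennreal_mult)
  moreover have "ennreal (cmod (conv2 f1 f2 x)) \<le> (\<integral>\<^sup>+y. ennreal (cmod (f1 y * f2 (x - y))) \<partial>lebesgue)"
    unfolding conv2_def by (rule integral_norm_bound_ennreal[OF True])
  ultimately show ?thesis by (simp add: nn_integral_completion)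
next
  case False
  then show ?thesis by (simp add: conv2_def not_integrable_integral_eq)
qed

lemma nn_integral_square_eq_L2norm:
  assumes "is_L2 f" and "AE x in lborel. ennreal (cmod (f x)) = u x"
  shows "(\<integral>\<^sup>+x. (u x)\<^sup>2 \<partial>lborel) = ennreal ((L2norm f)\<^sup>2)"
proof -
  have "(\<integral>\<^sup>+x. (u x)\<^sup>2 \<partial>lborel) = (\<integral>\<^sup>+x. ennreal ((cmod (f x))\<^sup>2) \<partial>lebesgue)"
    unfolding nn_integral_completion
    by (rule nn_integral_cong_AE, use assms(2) in eventually_elim) (simp add: ennreal_power[symmetric])
  also have "\<dots> = ennreal (\<integral>x. (cmod (f x))\<^sup>2 \<partial>lebesgue)"
    using assms(1) by (intro nn_integral_eq_integral) (auto simp: is_L2_def)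
  finally show ?thesis
    by (simp add: L2norm_def integral_nonneg_AE)
qed

lemma L2norm_le_sqrt:
  assumes "(\<integral>\<^sup>+x. ennreal ((cmod (F x))\<^sup>2) \<partial>lborel) \<le> ennreal R" and "R \<ge> 0"
  shows "L2norm F \<le> sqrt R"
proof -
  have "(\<integral>x. (cmod (F x))\<^sup>2 \<partial>lebesgue) \<le> R"
  proof (cases "integrable lebesgue (\<lambda>x. (cmod (F x))\<^sup>2)")
    case True
    then have "ennreal (\<integral>x. (cmod (F x))\<^sup>2 \<partial>lebesgue) \<le> ennreal R"
      using assms(1) by (simp add: nn_integral_eq_integral[symmetric] nn_integral_completion)
    then show ?thesis using assms(2) by (simp add: ennreal_le_iff)
  qed (use assms(2) in \<open>simp add: not_integrable_integral_eq\<close>)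
  then show ?thesis by (simp add: L2norm_def)
qed

lemma L2norm_indicator_conv2_le:
  fixes f1 f2 :: "real \<times> real \<Rightarrow> complex"
  assumes f1: "is_L2 f1" "\<forall>x. x \<notin> A \<longrightarrow> f1 x = 0" and f2: "is_L2 f2" "\<forall>x. x \<notin> B \<longrightarrow> f2 x = 0"
    and AB [measurable]: "A \<in> sets borel" "B \<in> sets borel" and [measurable]: "E \<in> sets borel"
    and "D \<subseteq> E" and bounded: "conv_L2_bounded A B E M" and "M \<ge> 0"
  shows "L2norm (\<lambda>x. indicator D x * conv2 f1 f2 x) \<le> sqrt M * L2norm f1 * L2norm f2"
proof -
  obtain u where [measurable]: "u \<in> borel_measurable borel" and uA: "\<forall>x. x \<notin> A \<longrightarrow> u x = 0"
    and u: "AE x in lborel. ennreal (cmod (f1 x)) = u x"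
    using borel_modulus_ae[OF _ AB(1) f1(2)] f1(1) unfolding is_L2_def by blast
  obtain v where [measurable]: "v \<in> borel_measurable borel" and vB: "\<forall>x. x \<notin> B \<longrightarrow> v x = 0"
    and v: "AE x in lborel. ennreal (cmod (f2 x)) = v x"
    using borel_modulus_ae[OF _ AB(2) f2(2)] f2(1) unfolding is_L2_def by blast
  have "ennreal ((cmod (indicator D x * conv2 f1 f2 x))\<^sup>2) \<le> indicator E x * (nn_conv u v x)\<^sup>2" for x
  proof (cases "x \<in> D")
    case True
    have "ennreal ((cmod (conv2 f1 f2 x))\<^sup>2) = (ennreal (cmod (conv2 f1 f2 x)))\<^sup>2"
      by (simp add: ennreal_power)
    also have "\<dots> \<le> (nn_conv u v x)\<^sup>2"
      by (rule power_mono[OF conv2_modulus_le_nn_conv[OF _ _ u v]]) simp_all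
    finally show ?thesis
      using True \<open>D \<subseteq> E\<close> by (simp add: subsetD)
  qed simp
  then have "(\<integral>\<^sup>+x. ennreal ((cmod (indicator D x * conv2 f1 f2 x))\<^sup>2) \<partial>lborel)
      \<le> (\<integral>\<^sup>+x. indicator E x * (nn_conv u v x)\<^sup>2 \<partial>lborel)"
    by (rule nn_integral_mono)
  also have "\<dots> \<le> ennreal M * (\<integral>\<^sup>+y. (u y)\<^sup>2 \<partial>lborel) * (\<integral>\<^sup>+z. (v z)\<^sup>2 \<partial>lborel)"
    using bounded uA vB \<open>u \<in> borel_measurable borel\<close> \<open>v \<in> borel_measurable borel\<close>
    unfolding conv_L2_bounded_def by blast
  also have "\<dots> = ennreal (M * (L2norm f1)\<^sup>2 * (L2norm f2)\<^sup>2)"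
    unfolding nn_integral_square_eq_L2norm[OF f1(1) u] nn_integral_square_eq_L2norm[OF f2(1) v]
    using \<open>M \<ge> 0\<close> by (simp add: ennreal_mult)
  finally have "L2norm (\<lambda>x. indicator D x * conv2 f1 f2 x) \<le> sqrt (M * (L2norm f1)\<^sup>2 * (L2norm f2)\<^sup>2)"
    by (rule L2norm_le_sqrt) (use \<open>M \<ge> 0\<close> in simp)
  also have "sqrt (M * (L2norm f1)\<^sup>2 * (L2norm f2)\<^sup>2) = sqrt M * L2norm f1 * L2norm f2"
    unfolding real_sqrt_mult real_sqrt_abs by (simp add: L2norm_def)
  finally show ?thesis .
qed

section \<open>Neighbourhoods of the dyadic pieces of the parabola\<close>

lemma omega_uminus [simp]: "omega (- x) = - omega x"
  by (simp add: omega_def)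

lemma abs_omega: "\<bar>omega x\<bar> = x\<^sup>2"
  by (simp add: omega_def abs_mult power2_eq_square)

lemma omega_borel [measurable]: "omega \<in> borel_measurable borel"
  unfolding omega_def[abs_def] by measurable

lemma Iset_borel [measurable]: "Iset k \<in> sets borel"
  unfolding Iset_def by measurable

lemma Iset_iff: "x \<in> Iset k \<longleftrightarrow> 2 powr k / 2 \<le> \<bar>x\<bar> \<and> \<bar>x\<bar> \<le> 2 * 2 powr k"
  by (simp add: Iset_def powr_diff powr_add mult.commute)

lemma uminus_Iset_iff [simp]: "- x \<in> Iset k \<longleftrightarrow> x \<in> Iset k"
  by (simp add: Iset_def)

definition thick_parabola :: "int \<Rightarrow> real \<Rightarrow> (real \<times> real) set" where
  "thick_parabola k R = {(\<xi>, \<tau>). \<xi> \<in> Iset k \<and> \<bar>\<tau> - omega \<xi>\<bar> \<le> R}"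

lemma thick_parabola_borel [measurable]: "thick_parabola k R \<in> sets borel"
proof -
  have "thick_parabola k R
      = {p \<in> space (borel \<Otimes>\<^sub>M borel). fst p \<in> Iset k \<and> \<bar>snd p - omega (fst p)\<bar> \<le> R}"
    by (auto simp: thick_parabola_def space_pair_measure)
  also have "\<dots> \<in> sets (borel \<Otimes>\<^sub>M borel)"
    by measurable
  finally show ?thesis
    unfolding borel_prod .
qed

lemma uminus_thick_parabola: "x \<in> thick_parabola k R \<Longrightarrow> - x \<in> thick_parabola k R"
  by (auto simp: thick_parabola_def abs_minus_commute)

lemma Itil_bounds:
  assumes "x \<in> Itil j"
  shows "\<bar>x\<bar> \<le> 2 * 2 powr j" and "j \<ge> 1 \<Longrightarrow> 2 powr j / 2 \<le> \<bar>x\<bar>"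
  using assms by (auto simp: Itil_def Iset_iff split: if_splits)

lemma Dset_modulation_bounds:
  assumes "(\<xi>, \<tau>) \<in> Dset k j"
  shows "\<xi> \<in> Iset k" and "\<bar>\<tau> - omega \<xi>\<bar> \<le> 2 * 2 powr j + 4"
    and "j \<ge> 1 \<Longrightarrow> 2 powr j / 2 - 4 \<le> \<bar>\<tau> - omega \<xi>\<bar>"
proof -
  show \<xi>: "\<xi> \<in> Iset k"
    using assms by (simp add: Dset_def split: if_splits)
  show "\<bar>\<tau> - omega \<xi>\<bar> \<le> 2 * 2 powr j + 4" "j \<ge> 1 \<Longrightarrow> 2 powr j / 2 - 4 \<le> \<bar>\<tau> - omega \<xi>\<bar>"
  proof (atomize (full), cases "k \<ge> 1")
    case True
    then have "\<tau> - omega \<xi> \<in> Itil j"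
      using assms by (simp add: Dset_def)
    then show "\<bar>\<tau> - omega \<xi>\<bar> \<le> 2 * 2 powr j + 4 \<and> (j \<ge> 1 \<longrightarrow> 2 powr j / 2 - 4 \<le> \<bar>\<tau> - omega \<xi>\<bar>)"
      using Itil_bounds[of "\<tau> - omega \<xi>" j] by auto
  next
    case False
    \<comment> \<open>For \<open>k \<le> 0\<close> the set is defined by the size of \<open>\<tau>\<close>, which differs from the
      modulation \<open>\<tau> - omega \<xi>\<close> by at most \<open>\<xi>\<^sup>2 \<le> 4\<close>.\<close>
    have "2 powr k \<le> (2::real) powr 0"
      using False by (intro powr_mono) auto
    then have "\<bar>\<xi>\<bar> \<le> 2" using \<xi> by (simp add: Iset_iff)
    then have "\<bar>omega \<xi>\<bar> \<le> 4"
      using abs_le_square_iff[of \<xi> 2] by (simp add: abs_omega)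
    then show "\<bar>\<tau> - omega \<xi>\<bar> \<le> 2 * 2 powr j + 4 \<and> (j \<ge> 1 \<longrightarrow> 2 powr j / 2 - 4 \<le> \<bar>\<tau> - omega \<xi>\<bar>)"
      using assms False Itil_bounds[of \<tau> j] by (simp add: Dset_def) linarith
  qed
qed

lemma Dset_subset_thick_parabola: "Dset k j \<subseteq> thick_parabola k (6 * 2 powr j)"
proof
  fix x assume "x \<in> Dset k j"
  moreover obtain \<xi> \<tau> where "x = (\<xi>, \<tau>)" by fastforce
  moreover have "(1::real) \<le> 2 powr j" by (simp add: ge_one_powr_ge_zero)
  ultimately show "x \<in> thick_parabola k (6 * 2 powr j)"
    using Dset_modulation_bounds(1,2)[of \<xi> \<tau> k j] by (simp add: thick_parabola_def)
qed

lemma emeasure_two_intervals_le: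
  assumes "Ra \<ge> 0" "Rb \<ge> 0"
  shows "emeasure lborel {t. \<bar>t - a\<bar> \<le> Ra \<and> \<bar>t - b\<bar> \<le> Rb} \<le> ennreal (2 * min Ra Rb)"
proof -
  have "emeasure lborel {t. \<bar>t - a\<bar> \<le> Ra \<and> \<bar>t - b\<bar> \<le> Rb} \<le> emeasure lborel {a - Ra .. a + Ra}"
    by (rule emeasure_mono) (auto simp: abs_le_iff)
  moreover have "emeasure lborel {t. \<bar>t - a\<bar> \<le> Ra \<and> \<bar>t - b\<bar> \<le> Rb} \<le> emeasure lborel {b - Rb .. b + Rb}"
    by (rule emeasure_mono) (auto simp: abs_le_iff)
  ultimately show ?thesis
    using assms by (simp add: min_def)
qed

definition near_resonant :: "int \<Rightarrow> int \<Rightarrow> real \<Rightarrow> real \<Rightarrow> real \<Rightarrow> real set" where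
  "near_resonant ka kb \<xi> \<tau> W =
     {s. s \<in> Iset ka \<and> s + \<xi> \<in> Iset kb \<and> \<bar>omega s - omega (s + \<xi>) + \<tau>\<bar> \<le> W}"

lemma near_resonant_borel [measurable]: "near_resonant ka kb \<xi> \<tau> W \<in> sets borel"
  unfolding near_resonant_def by measurable

lemma emeasure_fiber_thick_parabola:
  assumes "Ra \<ge> 0" "Rb \<ge> 0"
  shows "emeasure lborel {y \<in> thick_parabola ka Ra. (\<xi>, \<tau>) + y \<in> thick_parabola kb Rb}
    \<le> ennreal (2 * min Ra Rb) * emeasure lborel (near_resonant ka kb \<xi> \<tau> (Ra + Rb))"
proof -
  let ?X = "{y \<in> thick_parabola ka Ra. (\<xi>, \<tau>) + y \<in> thick_parabola kb Rb}"
  have X: "?X = {p \<in> space (lborel \<Otimes>\<^sub>M lborel). fst p \<in> Iset ka \<and> \<bar>snd p - omega (fst p)\<bar> \<le> Ra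
      \<and> fst p + \<xi> \<in> Iset kb \<and> \<bar>snd p - (omega (fst p + \<xi>) - \<tau>)\<bar> \<le> Rb}"
    by (auto simp: thick_parabola_def space_pair_measure algebra_simps)
  have [measurable]: "?X \<in> sets (lborel \<Otimes>\<^sub>M lborel)"
    unfolding X by measurable
  \<comment> \<open>Each vertical slice of the fiber is the intersection of two intervals of radii \<open>Ra\<close>, \<open>Rb\<close>; it is
    empty unless their centres \<open>omega s\<close> and \<open>omega (s + \<xi>) - \<tau>\<close> are \<open>Ra + Rb\<close>-close.\<close>
  have slice: "emeasure lborel (Pair s -` ?X)
      \<le> ennreal (2 * min Ra Rb) * indicator (near_resonant ka kb \<xi> \<tau> (Ra + Rb)) s" for s
  proof (cases "s \<in> near_resonant ka kb \<xi> \<tau> (Ra + Rb)")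
    case True
    have "Pair s -` ?X \<subseteq> {t. \<bar>t - omega s\<bar> \<le> Ra \<and> \<bar>t - (omega (s + \<xi>) - \<tau>)\<bar> \<le> Rb}"
      unfolding X by (auto simp: space_pair_measure)
    then have "emeasure lborel (Pair s -` ?X) \<le> ennreal (2 * min Ra Rb)"
      by (rule order_trans[OF emeasure_mono emeasure_two_intervals_le[OF assms]]) simp
    then show ?thesis using True by simp
  next
    case False
    then have "Pair s -` ?X = {}"
      unfolding X by (auto simp: near_resonant_def space_pair_measure abs_le_iff)
    then show ?thesis by (simp only:) simp
  qed
  have "emeasure lborel ?X = emeasure (lborel \<Otimes>\<^sub>M lborel) ?X"
    by (simp add: lborel_prod)
  also have "\<dots> = (\<integral>\<^sup>+s. emeasure lborel (Pair s -` ?X) \<partial>lborel)"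
    by (rule lborel.emeasure_pair_measure_alt) measurable
  also have "\<dots> \<le> (\<integral>\<^sup>+s. ennreal (2 * min Ra Rb) * indicator (near_resonant ka kb \<xi> \<tau> (Ra + Rb)) s \<partial>lborel)"
    by (rule nn_integral_mono) (rule slice)
  also have "\<dots> = ennreal (2 * min Ra Rb) * emeasure lborel (near_resonant ka kb \<xi> \<tau> (Ra + Rb))"
    by (rule nn_integral_cmult_indicator) measurable
  finally show ?thesis .
qed

section \<open>Sublevel sets of differences of omega\<close>

lemma emeasure_lborel_abs_add_le: "0 \<le> r \<Longrightarrow> emeasure lborel {s::real. \<bar>s + c\<bar> \<le> r} = ennreal (2 * r)"
proof -
  assume "0 \<le> r"
  have "{s::real. \<bar>s + c\<bar> \<le> r} = {- c - r .. - c + r}" by (auto simp: abs_le_iff)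
  then show ?thesis using \<open>0 \<le> r\<close> by simp
qed

lemma abs_linear_le_imp:
  fixes d s e W :: real
  assumes "d \<noteq> 0" "\<bar>2 * d * s + e\<bar> \<le> W"
  shows "\<bar>s + e / (2 * d)\<bar> \<le> W / (2 * \<bar>d\<bar>)"
proof -
  have "\<bar>s + e / (2 * d)\<bar> = \<bar>2 * d * s + e\<bar> / (2 * \<bar>d\<bar>)"
    using assms(1) by (simp add: field_simps abs_mult abs_divide)
  also have "\<dots> \<le> W / (2 * \<bar>d\<bar>)"
    using assms by (intro divide_right_mono) auto
  finally show ?thesis .
qed

text \<open>Away from the sign change, \<open>s \<mapsto> omega s - omega (s + d)\<close> is affine with slope \<open>\<plusminus>2d\<close>; between
  \<open>0\<close> and \<open>-d\<close> it is \<open>\<plusminus>(2 u\<^sup>2 + d\<^sup>2/2)\<close> in the midpoint variable \<open>u = s + d/2\<close>.\<close>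
lemma omega_diff_sublevel_cases:
  fixes d s c W b :: real
  assumes "d \<noteq> 0" and le: "\<bar>omega s - omega (s + d) + c\<bar> \<le> W" and gap: "b \<le> \<bar>\<bar>s + d\<bar> - \<bar>s\<bar>\<bar>"
  defines "\<alpha> \<equiv> - (sgn d * c) / 2 - d\<^sup>2 / 4 - W / 2"
  shows "\<bar>s + (c - d\<^sup>2) / (2 * - d)\<bar> \<le> W / (2 * \<bar>d\<bar>) \<or> \<bar>s + (d\<^sup>2 + c) / (2 * d)\<bar> \<le> W / (2 * \<bar>d\<bar>)
    \<or> (\<alpha> \<le> (s + d / 2)\<^sup>2 \<and> (s + d / 2)\<^sup>2 \<le> \<alpha> + W \<and> b \<le> 2 * \<bar>s + d / 2\<bar>)"
proof -
  consider "s \<le> 0" "s + d \<le> 0" | "s \<ge> 0" "s + d \<ge> 0" | "s \<le> 0" "s + d \<ge> 0" "d > 0" | "s \<ge> 0" "s + d \<le> 0" "d < 0"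
    using \<open>d \<noteq> 0\<close> by linarith
  then show ?thesis
  proof cases
    case 1
    then have "omega s - omega (s + d) = 2 * - d * s - d\<^sup>2"
      by (simp add: omega_def abs_of_nonpos power2_eq_square algebra_simps)
    then show ?thesis
      using abs_linear_le_imp[of "- d" s "c - d\<^sup>2" W] \<open>d \<noteq> 0\<close> le by simp
  next
    case 2
    then have "omega s - omega (s + d) = 2 * d * s + d\<^sup>2"
      by (simp add: omega_def power2_eq_square algebra_simps)
    then show ?thesis
      using abs_linear_le_imp[of d s "d\<^sup>2 + c" W] \<open>d \<noteq> 0\<close> le by (simp add: add.assoc)
  next
    case 3
    then have u: "omega s - omega (s + d) + c = 2 * (s + d / 2)\<^sup>2 + d\<^sup>2 / 2 + sgn d * c"
      "\<bar>s + d\<bar> - \<bar>s\<bar> = 2 * (s + d / 2)"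
      by (simp_all add: omega_def abs_of_nonpos power2_eq_square algebra_simps)
    have "\<alpha> \<le> (s + d / 2)\<^sup>2"
      using le unfolding u \<alpha>_def abs_le_iff by (elim conjE) linarith
    moreover have "(s + d / 2)\<^sup>2 \<le> \<alpha> + W"
      using le unfolding u \<alpha>_def abs_le_iff by (elim conjE) linarith
    moreover have "b \<le> 2 * \<bar>s + d / 2\<bar>"
      using gap unfolding u abs_mult by simp
    ultimately show ?thesis by blast
  next
    case 4
    then have u: "omega s - omega (s + d) + c = - (2 * (s + d / 2)\<^sup>2 + d\<^sup>2 / 2 + sgn d * c)"
      "\<bar>s + d\<bar> - \<bar>s\<bar> = - 2 * (s + d / 2)"
      by (simp_all add: omega_def abs_of_nonpos power2_eq_square algebra_simps)
    have "\<alpha> \<le> (s + d / 2)\<^sup>2"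
      using le unfolding u \<alpha>_def abs_minus_cancel abs_le_iff by (elim conjE) linarith
    moreover have "(s + d / 2)\<^sup>2 \<le> \<alpha> + W"
      using le unfolding u \<alpha>_def abs_minus_cancel abs_le_iff by (elim conjE) linarith
    moreover have "b \<le> 2 * \<bar>s + d / 2\<bar>"
      using gap unfolding u abs_mult by simp
    ultimately show ?thesis by blast
  qed
qed

lemma emeasure_abs_add_between_le:
  assumes "0 \<le> a" "0 \<le> L"
  shows "emeasure lborel {s::real. a \<le> \<bar>s + e\<bar> \<and> \<bar>s + e\<bar> \<le> a + L} \<le> ennreal (2 * L)"
proof -
  have "{s. a \<le> \<bar>s + e\<bar> \<and> \<bar>s + e\<bar> \<le> a + L} \<subseteq> {a - e .. a + L - e} \<union> {- a - L - e .. - a - e}"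
    using assms by (auto simp: abs_if split: if_splits)
  then have "emeasure lborel {s. a \<le> \<bar>s + e\<bar> \<and> \<bar>s + e\<bar> \<le> a + L}
      \<le> emeasure lborel ({a - e .. a + L - e} \<union> {- a - L - e .. - a - e})"
    by (rule emeasure_mono) simp
  also have "\<dots> \<le> emeasure lborel {a - e .. a + L - e} + emeasure lborel {- a - L - e .. - a - e}"
    by (rule emeasure_subadditive) simp_all
  also have "\<dots> = ennreal (2 * L)"
    using assms by (simp flip: ennreal_plus)
  finally show ?thesis .
qed

lemma emeasure_square_band_le_sqrt:
  assumes "0 \<le> W"
  shows "emeasure lborel {s::real. \<alpha> \<le> (s + e)\<^sup>2 \<and> (s + e)\<^sup>2 \<le> \<alpha> + W \<and> b \<le> 2 * \<bar>s + e\<bar>}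
    \<le> ennreal (2 * sqrt W)"
proof -
  define a where "a = sqrt (max \<alpha> 0)"
  have "\<bar>x\<bar> \<le> a + sqrt W" "a \<le> \<bar>x\<bar>" if "\<alpha> \<le> x\<^sup>2" "x\<^sup>2 \<le> \<alpha> + W" for x :: real
  proof -
    have "\<bar>x\<bar> = sqrt (x\<^sup>2)" by simp
    also have "\<dots> \<le> sqrt (max \<alpha> 0 + W)" using that by (intro real_sqrt_le_mono) linarith
    also have "\<dots> \<le> a + sqrt W" unfolding a_def using assms by (intro sqrt_add_le_add_sqrt) auto
    finally show "\<bar>x\<bar> \<le> a + sqrt W" .
    have "sqrt (max \<alpha> 0) \<le> sqrt (x\<^sup>2)" using that by (intro real_sqrt_le_mono) simp
    then show "a \<le> \<bar>x\<bar>" by (simp add: a_def)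
  qed
  then have "{s. \<alpha> \<le> (s + e)\<^sup>2 \<and> (s + e)\<^sup>2 \<le> \<alpha> + W \<and> b \<le> 2 * \<bar>s + e\<bar>}
      \<subseteq> {s. a \<le> \<bar>s + e\<bar> \<and> \<bar>s + e\<bar> \<le> a + sqrt W}"
    by blast
  then show ?thesis
    by (rule order_trans[OF emeasure_mono emeasure_abs_add_between_le])
      (use assms in \<open>simp_all add: a_def\<close>)
qed

lemma emeasure_square_band_le_div:
  assumes "0 \<le> W" "0 < b"
  shows "emeasure lborel {s::real. \<alpha> \<le> (s + e)\<^sup>2 \<and> (s + e)\<^sup>2 \<le> \<alpha> + W \<and> b \<le> 2 * \<bar>s + e\<bar>}
    \<le> ennreal (2 * (W / b))"
proof -
  define a where "a = max (sqrt (max \<alpha> 0)) (b / 2)"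
  have "\<alpha> \<le> (sqrt (max \<alpha> 0))\<^sup>2" by simp
  also have "\<dots> \<le> a\<^sup>2" unfolding a_def by (intro power_mono) auto
  finally have "\<alpha> \<le> a\<^sup>2" .
  have "a \<le> \<bar>x\<bar> \<and> \<bar>x\<bar> \<le> a + W / b" if "\<alpha> \<le> x\<^sup>2" "x\<^sup>2 \<le> \<alpha> + W" "b \<le> 2 * \<bar>x\<bar>" for x :: real
  proof
    have "sqrt (max \<alpha> 0) \<le> sqrt (x\<^sup>2)" using that by (intro real_sqrt_le_mono) simp
    then show ax: "a \<le> \<bar>x\<bar>"
      using that(3) by (simp add: a_def)
    \<comment> \<open>Since \<open>\<bar>x\<bar> + a \<ge> b\<close>, the width \<open>W\<close> of the window for \<open>x\<^sup>2\<close> bounds \<open>b (\<bar>x\<bar> - a)\<close>.\<close>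
    have "(\<bar>x\<bar> - a) * b \<le> (\<bar>x\<bar> - a) * (\<bar>x\<bar> + a)"
      using ax that(3) assms(2) by (intro mult_left_mono) (auto simp: a_def)
    also have "\<dots> = x\<^sup>2 - a\<^sup>2" by (simp add: power2_eq_square algebra_simps)
    also have "\<dots> \<le> W" using that \<open>\<alpha> \<le> a\<^sup>2\<close> by linarith
    finally show "\<bar>x\<bar> \<le> a + W / b"
      using assms(2) by (simp add: field_simps)
  qed
  then have "{s. \<alpha> \<le> (s + e)\<^sup>2 \<and> (s + e)\<^sup>2 \<le> \<alpha> + W \<and> b \<le> 2 * \<bar>s + e\<bar>}
      \<subseteq> {s. a \<le> \<bar>s + e\<bar> \<and> \<bar>s + e\<bar> \<le> a + W / b}"
    by blast
  then show ?thesis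
    by (rule order_trans[OF emeasure_mono emeasure_abs_add_between_le])
      (use assms in \<open>simp_all add: a_def\<close>)
qed

lemma emeasure_omega_diff_sublevel_le:
  fixes d c W b L :: real
  assumes "d \<noteq> 0" "0 \<le> W" "0 \<le> L"
    and band: "\<And>\<alpha>. emeasure lborel {s. \<alpha> \<le> (s + d / 2)\<^sup>2 \<and> (s + d / 2)\<^sup>2 \<le> \<alpha> + W \<and> b \<le> 2 * \<bar>s + d / 2\<bar>}
      \<le> ennreal L"
  shows "emeasure lborel {s. \<bar>omega s - omega (s + d) + c\<bar> \<le> W \<and> b \<le> \<bar>\<bar>s + d\<bar> - \<bar>s\<bar>\<bar>}
    \<le> ennreal (2 * W / \<bar>d\<bar> + L)"
proof -
  define \<alpha> where "\<alpha> = - (sgn d * c) / 2 - d\<^sup>2 / 4 - W / 2"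
  define r where "r = W / (2 * \<bar>d\<bar>)"
  let ?S1 = "{s. \<bar>s + (c - d\<^sup>2) / (2 * - d)\<bar> \<le> r}"
  let ?S2 = "{s. \<bar>s + (d\<^sup>2 + c) / (2 * d)\<bar> \<le> r}"
  let ?B = "{s. \<alpha> \<le> (s + d / 2)\<^sup>2 \<and> (s + d / 2)\<^sup>2 \<le> \<alpha> + W \<and> b \<le> 2 * \<bar>s + d / 2\<bar>}"
  have "{s. \<bar>omega s - omega (s + d) + c\<bar> \<le> W \<and> b \<le> \<bar>\<bar>s + d\<bar> - \<bar>s\<bar>\<bar>} \<subseteq> ?S1 \<union> ?S2 \<union> ?B"
    using omega_diff_sublevel_cases[OF \<open>d \<noteq> 0\<close>] unfolding \<alpha>_def r_def by blast
  then have "emeasure lborel {s. \<bar>omega s - omega (s + d) + c\<bar> \<le> W \<and> b \<le> \<bar>\<bar>s + d\<bar> - \<bar>s\<bar>\<bar>}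
      \<le> emeasure lborel (?S1 \<union> ?S2 \<union> ?B)"
    by (rule emeasure_mono) simp
  also have "\<dots> \<le> emeasure lborel ?S1 + emeasure lborel ?S2 + emeasure lborel ?B"
    by (intro order_trans[OF emeasure_subadditive] add_right_mono) simp_all
  also have "\<dots> \<le> ennreal (2 * r) + ennreal (2 * r) + ennreal L"
  proof -
    have "0 \<le> r" using assms(2) by (simp add: r_def)
    then have "emeasure lborel ?S1 = ennreal (2 * r)" "emeasure lborel ?S2 = ennreal (2 * r)"
      by (rule emeasure_lborel_abs_add_le)+
    then show ?thesis using band[of \<alpha>] by simp
  qed
  also have "\<dots> = ennreal (2 * W / \<bar>d\<bar> + L)"
    using assms by (simp add: r_def flip: ennreal_plus)
  finally show ?thesis .
qed

section \<open>Fiber bounds for neighbourhoods of the parabola\<close>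

lemma abs_add_gap:
  fixes a b :: real
  assumes "8 * min (\<bar>a\<bar>) (min (\<bar>b\<bar>) (\<bar>a + b\<bar>)) \<le> max (\<bar>a\<bar>) (max (\<bar>b\<bar>) (\<bar>a + b\<bar>))"
  shows "3 / 4 * \<bar>b\<bar> \<le> \<bar>\<bar>a + b\<bar> - \<bar>a\<bar>\<bar>"
  using assms by (auto simp: abs_if min_def max_def split: if_splits)

lemma Iset_add_gap:
  assumes a: "a \<in> Iset ka" and b: "b \<in> Iset kb" and ab: "a + b \<in> Iset kc"
    and spread: "min ka (min kb kc) + 5 \<le> max ka (max kb kc)"
  shows "3 / 8 * 2 powr kb \<le> \<bar>\<bar>a + b\<bar> - \<bar>a\<bar>\<bar>"
proof -
  define K where "K = max ka (max kb kc)"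
  define k where "k = min ka (min kb kc)"
  have "2 powr K / 2 \<le> max (\<bar>a\<bar>) (max (\<bar>b\<bar>) (\<bar>a + b\<bar>))"
    using a b ab unfolding K_def Iset_iff by (auto simp: max_def)
  moreover have "min (\<bar>a\<bar>) (min (\<bar>b\<bar>) (\<bar>a + b\<bar>)) \<le> 2 * 2 powr k"
    using a b ab unfolding k_def Iset_iff by (auto simp: min_def)
  moreover have "32 * 2 powr k \<le> (2::real) powr K"
    using powr_mono[of "k + 5" K 2] spread by (simp add: K_def k_def powr_add)
  ultimately have "3 / 4 * \<bar>b\<bar> \<le> \<bar>\<bar>a + b\<bar> - \<bar>a\<bar>\<bar>"
    by (intro abs_add_gap) linarith
  then show ?thesis
    using b by (simp add: Iset_iff)
qed

lemma emeasure_near_resonant_le_size: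
  "emeasure lborel (near_resonant ka kb \<xi> \<tau> W) \<le> ennreal (4 * 2 powr real_of_int (min ka kb))"
proof -
  have "emeasure lborel (near_resonant ka kb \<xi> \<tau> W) \<le> emeasure lborel {- 2 * 2 powr ka .. 2 * 2 powr ka}"
    by (rule emeasure_mono) (auto simp: near_resonant_def Iset_iff abs_le_iff)
  moreover have "emeasure lborel (near_resonant ka kb \<xi> \<tau> W)
      \<le> emeasure lborel {- \<xi> - 2 * 2 powr kb .. - \<xi> + 2 * 2 powr kb}"
    by (rule emeasure_mono) (auto simp: near_resonant_def Iset_iff abs_le_iff)
  ultimately show ?thesis
    by (cases "ka \<le> kb") (simp_all add: min_def)
qed

lemma divide_abs_Iset_le:
  assumes "\<xi> \<in> Iset kc" "0 \<le> W"
  shows "2 * W / \<bar>\<xi>\<bar> \<le> 4 * W / 2 powr kc"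
proof -
  have "2 powr kc / 2 \<le> \<bar>\<xi>\<bar>" using assms(1) by (simp add: Iset_iff)
  moreover have "0 < 2 powr kc / 2" by simp
  ultimately have "2 * W / \<bar>\<xi>\<bar> \<le> 2 * W / (2 powr kc / 2)"
    using assms(2) by (intro divide_left_mono mult_pos_pos) auto
  then show ?thesis by simp
qed

lemma emeasure_near_resonant_le_sqrt:
  assumes "\<xi> \<in> Iset kc" "0 \<le> W"
  shows "emeasure lborel (near_resonant ka kb \<xi> \<tau> W) \<le> ennreal (4 * W / 2 powr kc + 2 * sqrt W)"
proof -
  have "\<xi> \<noteq> 0" using assms(1) by (auto simp: Iset_iff)
  have "emeasure lborel (near_resonant ka kb \<xi> \<tau> W)
      \<le> emeasure lborel {s. \<bar>omega s - omega (s + \<xi>) + \<tau>\<bar> \<le> W \<and> 0 \<le> \<bar>\<bar>s + \<xi>\<bar> - \<bar>s\<bar>\<bar>}"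
    by (rule emeasure_mono) (auto simp: near_resonant_def)
  also have "\<dots> \<le> ennreal (2 * W / \<bar>\<xi>\<bar> + 2 * sqrt W)"
  proof (rule emeasure_omega_diff_sublevel_le[OF \<open>\<xi> \<noteq> 0\<close> assms(2)])
    show "0 \<le> 2 * sqrt W" using assms(2) by simp
  qed (rule emeasure_square_band_le_sqrt[OF assms(2)])
  also have "\<dots> \<le> ennreal (4 * W / 2 powr kc + 2 * sqrt W)"
    using divide_abs_Iset_le[OF assms] by (intro ennreal_leI) simp
  finally show ?thesis .
qed

lemma emeasure_near_resonant_le_gap:
  assumes "\<xi> \<in> Iset kc" "0 \<le> W" and spread: "min ka (min kb kc) + 5 \<le> max ka (max kb kc)"
  shows "emeasure lborel (near_resonant ka kb \<xi> \<tau> W) \<le> ennreal (10 * W / 2 powr kc)"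
proof -
  have "\<xi> \<noteq> 0" using assms(1) by (auto simp: Iset_iff)
  define b where "b = 3 / 8 * 2 powr kc"
  have "b > 0" by (simp add: b_def)
  have "near_resonant ka kb \<xi> \<tau> W \<subseteq> {s. \<bar>omega s - omega (s + \<xi>) + \<tau>\<bar> \<le> W \<and> b \<le> \<bar>\<bar>s + \<xi>\<bar> - \<bar>s\<bar>\<bar>}"
  proof
    fix s assume "s \<in> near_resonant ka kb \<xi> \<tau> W"
    moreover have "min ka (min kc kb) + 5 \<le> max ka (max kc kb)"
      using spread by (simp add: min.commute min.left_commute max.commute max.left_commute)
    ultimately show "s \<in> {s. \<bar>omega s - omega (s + \<xi>) + \<tau>\<bar> \<le> W \<and> b \<le> \<bar>\<bar>s + \<xi>\<bar> - \<bar>s\<bar>\<bar>}"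
      using Iset_add_gap[of s ka \<xi> kc kb] assms(1) by (auto simp: near_resonant_def b_def add.commute)
  qed
  then have "emeasure lborel (near_resonant ka kb \<xi> \<tau> W)
      \<le> emeasure lborel {s. \<bar>omega s - omega (s + \<xi>) + \<tau>\<bar> \<le> W \<and> b \<le> \<bar>\<bar>s + \<xi>\<bar> - \<bar>s\<bar>\<bar>}"
    by (rule emeasure_mono) simp
  also have "\<dots> \<le> ennreal (2 * W / \<bar>\<xi>\<bar> + 2 * (W / b))"
    by (rule emeasure_omega_diff_sublevel_le[OF \<open>\<xi> \<noteq> 0\<close> assms(2)])
      (use assms(2) \<open>b > 0\<close> emeasure_square_band_le_div in auto)
  also have "\<dots> \<le> ennreal (10 * W / 2 powr kc)"
  proof (intro ennreal_leI)
    have "2 * (W / b) \<le> 6 * W / 2 powr kc"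
      using assms(2) by (simp add: b_def field_simps)
    then show "2 * W / \<bar>\<xi>\<bar> + 2 * (W / b) \<le> 10 * W / 2 powr kc"
      using divide_abs_Iset_le[OF assms(1,2)] by (simp add: field_simps)
  qed
  finally show ?thesis .
qed

definition pair_splits :: "'a \<Rightarrow> 'a \<Rightarrow> 'a \<Rightarrow> ('a \<times> 'a \<times> 'a) set" where
  "pair_splits x1 x2 x3 = {(x1, x2, x3), (x1, x3, x2), (x2, x3, x1)}"

lemma conv_L2_bounded_thick_parabola:
  assumes split: "((ka, Ra), (kb, Rb), (kc, Rc)) \<in> pair_splits (k1, R1) (k2, R2) (k3, R3)"
    and "0 \<le> Ra" "0 \<le> Rb" "0 \<le> Q"
    and near: "\<And>\<xi> \<tau>. \<xi> \<in> Iset kc \<Longrightarrow> emeasure lborel (near_resonant ka kb \<xi> \<tau> (Ra + Rb)) \<le> ennreal Q"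
  shows "conv_L2_bounded (thick_parabola k1 R1) (thick_parabola k2 R2) (thick_parabola k3 R3)
    (2 * min Ra Rb * Q)"
proof (rule conv_L2_bounded_if_fibers)
  show "(thick_parabola kc Rc, thick_parabola ka Ra, thick_parabola kb Rb)
      \<in> {(thick_parabola k3 R3, thick_parabola k1 R1, thick_parabola k2 R2),
         (thick_parabola k2 R2, thick_parabola k1 R1, thick_parabola k3 R3),
         (thick_parabola k1 R1, thick_parabola k2 R2, thick_parabola k3 R3)}"
    using split unfolding pair_splits_def by (elim insertE emptyE) simp_all
  fix w assume "w \<in> thick_parabola kc Rc"
  then obtain \<xi> \<tau> where w: "w = (\<xi>, \<tau>)" and "\<xi> \<in> Iset kc"
    by (auto simp: thick_parabola_def)
  have "emeasure lborel {y \<in> thick_parabola ka Ra. w + y \<in> thick_parabola kb Rb}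
      \<le> ennreal (2 * min Ra Rb) * emeasure lborel (near_resonant ka kb \<xi> \<tau> (Ra + Rb))"
    unfolding w by (rule emeasure_fiber_thick_parabola) fact+
  also have "\<dots> \<le> ennreal (2 * min Ra Rb) * ennreal Q"
    using near[OF \<open>\<xi> \<in> Iset kc\<close>] by (rule mult_left_mono) simp
  also have "\<dots> = ennreal (2 * min Ra Rb * Q)"
    using assms(2-4) by (simp add: ennreal_mult)
  finally show "emeasure lborel {y \<in> thick_parabola ka Ra. w + y \<in> thick_parabola kb Rb}
      \<le> ennreal (2 * min Ra Rb * Q)" .
qed (simp_all add: uminus_thick_parabola)

abbreviation Dnbhd :: "int \<Rightarrow> nat \<Rightarrow> (real \<times> real) set" where
  "Dnbhd k j \<equiv> thick_parabola k (6 * 2 powr j)"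

lemma min_mult_powr_two: "0 \<le> c \<Longrightarrow> min (c * 2 powr x) (c * 2 powr y) = c * (2::real) powr (min x y)"
  by (cases "c = 0") (auto simp: min_def)

lemma pair_splits_Dnbhd:
  fixes ja jb jc j1 j2 j3 :: nat
  assumes "((ka, ja), (kb, jb), (kc, jc)) \<in> pair_splits (k1, j1) (k2, j2) (k3, j3)"
  shows "((ka, 6 * 2 powr ja), (kb, 6 * 2 powr jb), (kc, 6 * 2 powr jc))
    \<in> pair_splits (k1, 6 * 2 powr j1) (k2, 6 * 2 powr j2) (k3, 6 * 2 powr j3)"
  using assms by (auto simp: pair_splits_def)

lemma conv_L2_bounded_Dnbhd_size:
  fixes ja jb jc j1 j2 j3 :: nat
  assumes split: "((ka, ja), (kb, jb), (kc, jc)) \<in> pair_splits (k1, j1) (k2, j2) (k3, j3)"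
  shows "conv_L2_bounded (Dnbhd k1 j1) (Dnbhd k2 j2) (Dnbhd k3 j3)
    (48 * 2 powr (real (min ja jb) + real_of_int (min ka kb)))"
proof -
  have "conv_L2_bounded (Dnbhd k1 j1) (Dnbhd k2 j2) (Dnbhd k3 j3)
      (2 * min (6 * 2 powr ja) (6 * 2 powr jb) * (4 * 2 powr real_of_int (min ka kb)))"
    by (intro conv_L2_bounded_thick_parabola[OF pair_splits_Dnbhd[OF split]] emeasure_near_resonant_le_size)
      simp_all
  also have "2 * min (6 * 2 powr ja) (6 * 2 powr jb) * (4 * 2 powr real_of_int (min ka kb))
      = 48 * 2 powr (real (min ja jb) + real_of_int (min ka kb))"
    by (simp add: powr_add of_nat_min min_mult_powr_two)
  finally show ?thesis .
qed

lemma min_mult_add_le: "0 \<le> p \<Longrightarrow> 0 \<le> q \<Longrightarrow> min p q * (p + q) \<le> 2 * (p * q :: real)"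
  by (cases "p \<le> q") (auto simp: min_def algebra_simps intro: mult_left_mono mult_right_mono)

lemma conv_L2_bounded_Dnbhd_gap:
  fixes ja jb jc j1 j2 j3 :: nat
  assumes split: "((ka, ja), (kb, jb), (kc, jc)) \<in> pair_splits (k1, j1) (k2, j2) (k3, j3)"
    and spread: "min k1 (min k2 k3) + 5 \<le> max k1 (max k2 k3)"
  shows "conv_L2_bounded (Dnbhd k1 j1) (Dnbhd k2 j2) (Dnbhd k3 j3)
    (1440 * 2 powr (real ja + real jb - real_of_int kc))"
proof -
  define p q where "p = (2::real) powr ja" and "q = (2::real) powr jb"
  have "min ka (min kb kc) + 5 \<le> max ka (max kb kc)"
    using split spread unfolding pair_splits_def
    by (elim insertE emptyE) (simp_all add: min.commute min.left_commute max.commute max.left_commute)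
  then have "conv_L2_bounded (Dnbhd k1 j1) (Dnbhd k2 j2) (Dnbhd k3 j3)
      (2 * min (6 * p) (6 * q) * (10 * (6 * p + 6 * q) / 2 powr kc))"
    unfolding p_def q_def
    by (intro conv_L2_bounded_thick_parabola[OF pair_splits_Dnbhd[OF split]] emeasure_near_resonant_le_gap)
      simp_all
  moreover have "2 * min (6 * p) (6 * q) * (10 * (6 * p + 6 * q) / 2 powr kc)
      \<le> 1440 * 2 powr (real ja + real jb - real_of_int kc)"
  proof -
    have "2 * min (6 * p) (6 * q) * (10 * (6 * p + 6 * q) / 2 powr kc)
        = 720 * (min p q * (p + q)) / 2 powr kc"
      by (simp add: min_mult_distrib_left[symmetric] algebra_simps)
    also have "\<dots> \<le> 720 * (2 * (p * q)) / 2 powr kc"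
      by (intro divide_right_mono mult_left_mono min_mult_add_le) (simp_all add: p_def q_def)
    also have "\<dots> = 1440 * 2 powr (real ja + real jb - real_of_int kc)"
      by (simp add: p_def q_def powr_add powr_diff)
    finally show ?thesis .
  qed
  ultimately show ?thesis
    by (rule conv_L2_bounded_mono)
qed

lemma conv_L2_bounded_Dnbhd_sqrt:
  fixes ja jb jc j1 j2 j3 :: nat
  assumes split: "((ka, ja), (kb, jb), (kc, jc)) \<in> pair_splits (k1, j1) (k2, j2) (k3, j3)"
    and small: "real (max ja jb) \<le> 2 * real_of_int kc"
  shows "conv_L2_bounded (Dnbhd k1 j1) (Dnbhd k2 j2) (Dnbhd k3 j3)
    (660 * 2 powr (real (min ja jb) + real (max ja jb) / 2))"
proof -
  define m M where "m = real (min ja jb)" and "M = real (max ja jb)"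
  define W where "W = 6 * 2 powr ja + 6 * 2 powr jb"
  have "(2::real) powr ja \<le> 2 powr M" "(2::real) powr jb \<le> 2 powr M"
    by (simp_all add: M_def)
  then have W: "0 \<le> W" "W \<le> 12 * 2 powr M"
    unfolding W_def by (simp, linarith)
  have "conv_L2_bounded (Dnbhd k1 j1) (Dnbhd k2 j2) (Dnbhd k3 j3)
      (2 * min (6 * 2 powr ja) (6 * 2 powr jb) * (4 * W / 2 powr kc + 2 * sqrt W))"
    unfolding W_def
    by (intro conv_L2_bounded_thick_parabola[OF pair_splits_Dnbhd[OF split]] emeasure_near_resonant_le_sqrt)
      simp_all
  moreover have "2 * min (6 * 2 powr ja) (6 * 2 powr jb) = 12 * 2 powr m"
    by (simp add: m_def of_nat_min min_mult_powr_two)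
  moreover have "4 * W / 2 powr kc + 2 * sqrt W \<le> 55 * 2 powr (M / 2)"
  proof -
    have "4 * W / 2 powr kc \<le> 48 * 2 powr (M - kc)"
      using W by (simp add: powr_diff divide_right_mono)
    also have "\<dots> \<le> 48 * 2 powr (M / 2)"
      using small by (simp add: M_def)
    finally have 1: "4 * W / 2 powr kc \<le> 48 * 2 powr (M / 2)" .
    have "sqrt W \<le> sqrt 12 * 2 powr (M / 2)"
      using real_sqrt_le_mono[OF W(2)] by (simp add: real_sqrt_mult powr_half_sqrt_powr)
    moreover have "sqrt 12 \<le> (7 / 2 :: real)"
      by (rule real_le_lsqrt) (simp_all add: power2_eq_square)
    then have "sqrt 12 * 2 powr (M / 2) \<le> 7 / 2 * 2 powr (M / 2)"
      by (rule mult_right_mono) simp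
    ultimately have "2 * sqrt W \<le> 7 * 2 powr (M / 2)"
      by linarith
    with 1 show ?thesis by simp
  qed
  ultimately have "conv_L2_bounded (Dnbhd k1 j1) (Dnbhd k2 j2) (Dnbhd k3 j3) (12 * 2 powr m * (55 * 2 powr (M / 2)))"
    by (elim conv_L2_bounded_mono) (simp add: mult_left_mono)
  then show ?thesis
    by (simp add: m_def M_def powr_add)
qed

section \<open>The resonance function and the support of the convolution\<close>

lemma omega_resonance_same_sign:
  fixes x y :: real
  assumes "0 \<le> x * y"
  shows "\<bar>omega x + omega y - omega (x + y)\<bar> = 2 * (\<bar>x\<bar> * \<bar>y\<bar>)" and "\<bar>x + y\<bar> = \<bar>x\<bar> + \<bar>y\<bar>"
proof -
  have "(0 \<le> x \<and> 0 \<le> y) \<or> (x \<le> 0 \<and> y \<le> 0)"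
    using assms by (auto simp: zero_le_mult_iff)
  then show "\<bar>omega x + omega y - omega (x + y)\<bar> = 2 * (\<bar>x\<bar> * \<bar>y\<bar>)" "\<bar>x + y\<bar> = \<bar>x\<bar> + \<bar>y\<bar>"
    by (auto simp: omega_def abs_of_nonpos abs_mult algebra_simps)
qed

text \<open>With \<open>c = a + b\<close>, the resonance is symmetric in the triple \<open>(a, b, -c)\<close> of sum zero, two members of
  which have the same sign.\<close>
lemma abs_omega_resonance:
  fixes a b :: real
  shows "\<bar>omega a + omega b - omega (a + b)\<bar>
    = 2 * min (\<bar>a\<bar> * \<bar>b\<bar>) (min (\<bar>a\<bar> * \<bar>a + b\<bar>) (\<bar>b\<bar> * \<bar>a + b\<bar>))"
proof -
  have mono: "\<bar>u\<bar> * \<bar>v\<bar> \<le> \<bar>u\<bar> * (\<bar>u\<bar> + \<bar>v\<bar>)" "\<bar>u\<bar> * \<bar>v\<bar> \<le> (\<bar>u\<bar> + \<bar>v\<bar>) * \<bar>v\<bar>" for u v :: real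
    by (simp_all add: mult_left_mono mult_right_mono)
  consider "0 \<le> a * b" | "0 \<le> a * - (a + b)" | "0 \<le> b * - (a + b)"
    by (cases "0 \<le> a"; cases "0 \<le> b"; cases "0 \<le> a + b") (auto simp: zero_le_mult_iff)
  then show ?thesis
  proof cases
    case 1
    note s = omega_resonance_same_sign[OF 1]
    have "\<bar>a\<bar> * \<bar>b\<bar> \<le> \<bar>a\<bar> * \<bar>a + b\<bar>" "\<bar>a\<bar> * \<bar>b\<bar> \<le> \<bar>b\<bar> * \<bar>a + b\<bar>"
      unfolding s(2) using mono[of a b] by (simp_all add: mult.commute)
    then show ?thesis
      unfolding s(1) by (subst min_absorb1) simp_all
  next
    case 2
    note s = omega_resonance_same_sign[OF 2]
    have e: "a + - (a + b) = - b" by simp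
    have "\<bar>b\<bar> = \<bar>a\<bar> + \<bar>a + b\<bar>"
      using s(2) unfolding e by simp
    then have "\<bar>a\<bar> * \<bar>a + b\<bar> \<le> \<bar>a\<bar> * \<bar>b\<bar>" "\<bar>a\<bar> * \<bar>a + b\<bar> \<le> \<bar>b\<bar> * \<bar>a + b\<bar>"
      using mono[of a "a + b"] by simp_all
    moreover have "\<bar>omega a + omega b - omega (a + b)\<bar> = 2 * (\<bar>a\<bar> * \<bar>a + b\<bar>)"
      using s(1) unfolding e omega_uminus abs_minus_cancel by (simp add: algebra_simps)
    ultimately show ?thesis
      by (simp only: min_absorb1 min_absorb2)
  next
    case 3
    note s = omega_resonance_same_sign[OF 3]
    have e: "b + - (a + b) = - a" by simp
    have "\<bar>a\<bar> = \<bar>b\<bar> + \<bar>a + b\<bar>"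
      using s(2) unfolding e by simp
    then have "\<bar>b\<bar> * \<bar>a + b\<bar> \<le> \<bar>a\<bar> * \<bar>b\<bar>" "\<bar>b\<bar> * \<bar>a + b\<bar> \<le> \<bar>a\<bar> * \<bar>a + b\<bar>"
      using mono[of b "a + b"] by (simp_all add: mult.commute)
    moreover have "\<bar>omega a + omega b - omega (a + b)\<bar> = 2 * (\<bar>b\<bar> * \<bar>a + b\<bar>)"
      using s(1) unfolding e omega_uminus abs_minus_cancel by (simp add: algebra_simps)
    ultimately show ?thesis
      by (simp only: min_absorb2)
  qed
qed

lemma med3_pair_sums:
  fixes k1 k2 k3 :: int
  shows "min k1 (min k2 k3) + med3 k1 k2 k3 \<le> k1 + k2" "min k1 (min k2 k3) + med3 k1 k2 k3 \<le> k1 + k3"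
    "min k1 (min k2 k3) + med3 k1 k2 k3 \<le> k2 + k3"
    and "k1 + k2 = min k1 (min k2 k3) + med3 k1 k2 k3 \<or> k1 + k3 = min k1 (min k2 k3) + med3 k1 k2 k3
      \<or> k2 + k3 = min k1 (min k2 k3) + med3 k1 k2 k3"
  unfolding med3_def by (auto simp: max_def min_def)

lemma Iset_mult_bounds:
  assumes "x \<in> Iset k" "y \<in> Iset l"
  shows "2 powr (k + l) / 4 \<le> \<bar>x\<bar> * \<bar>y\<bar>" "\<bar>x\<bar> * \<bar>y\<bar> \<le> 4 * 2 powr (k + l)"
proof -
  have x: "2 powr k / 2 \<le> \<bar>x\<bar>" "\<bar>x\<bar> \<le> 2 * 2 powr k" and y: "2 powr l / 2 \<le> \<bar>y\<bar>" "\<bar>y\<bar> \<le> 2 * 2 powr l"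
    using assms by (simp_all add: Iset_iff)
  have "2 powr k / 2 * (2 powr l / 2) \<le> \<bar>x\<bar> * \<bar>y\<bar>"
    using x(1) y(1) by (intro mult_mono) auto
  then show "2 powr (k + l) / 4 \<le> \<bar>x\<bar> * \<bar>y\<bar>"
    by (simp add: powr_add)
  have "\<bar>x\<bar> * \<bar>y\<bar> \<le> 2 * 2 powr k * (2 * 2 powr l)"
    using x(2) y(2) by (intro mult_mono) auto
  then show "\<bar>x\<bar> * \<bar>y\<bar> \<le> 4 * 2 powr (k + l)"
    by (simp add: powr_add)
qed

lemma abs_omega_resonance_bounds:
  assumes "a \<in> Iset k1" "b \<in> Iset k2" "a + b \<in> Iset k3"
  defines "T \<equiv> 2 powr real_of_int (min k1 (min k2 k3) + med3 k1 k2 k3)"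
  shows "T / 2 \<le> \<bar>omega a + omega b - omega (a + b)\<bar>" "\<bar>omega a + omega b - omega (a + b)\<bar> \<le> 8 * T"
proof -
  note ab = Iset_mult_bounds[OF assms(1,2)] and ac = Iset_mult_bounds[OF assms(1,3)]
    and bc = Iset_mult_bounds[OF assms(2,3)]
  have "T \<le> 2 powr (k1 + k2)" "T \<le> 2 powr (k1 + k3)" "T \<le> 2 powr (k2 + k3)"
    unfolding T_def using med3_pair_sums(1-3)[of k1 k2 k3] by simp_all
  then have "T / 4 \<le> min (\<bar>a\<bar> * \<bar>b\<bar>) (min (\<bar>a\<bar> * \<bar>a + b\<bar>) (\<bar>b\<bar> * \<bar>a + b\<bar>))"
    using ab(1) ac(1) bc(1) by (intro min.boundedI; linarith)
  then show "T / 2 \<le> \<bar>omega a + omega b - omega (a + b)\<bar>"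
    unfolding abs_omega_resonance by linarith
  have "min (\<bar>a\<bar> * \<bar>b\<bar>) (min (\<bar>a\<bar> * \<bar>a + b\<bar>) (\<bar>b\<bar> * \<bar>a + b\<bar>)) \<le> 4 * T"
    using med3_pair_sums(4)[of k1 k2 k3]
  proof (elim disjE)
    assume "k1 + k2 = min k1 (min k2 k3) + med3 k1 k2 k3"
    then show ?thesis using ab(2) unfolding T_def by (simp add: min.coboundedI1)
  next
    assume "k1 + k3 = min k1 (min k2 k3) + med3 k1 k2 k3"
    then show ?thesis using ac(2) unfolding T_def by (simp add: min.coboundedI2 min.coboundedI1)
  next
    assume "k2 + k3 = min k1 (min k2 k3) + med3 k1 k2 k3"
    then show ?thesis using bc(2) unfolding T_def by (simp add: min.coboundedI2)
  qed
  then show "\<bar>omega a + omega b - omega (a + b)\<bar> \<le> 8 * T"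
    unfolding abs_omega_resonance by linarith
qed

text \<open>If one of the three dyadic scales exceeds the other two by a factor \<open>8\<close>, the triangle inequality
  for \<open>a + b\<close> can only hold with both smaller frequencies at the outer edge of their annuli.\<close>
lemma Iset_add_boundary:
  assumes a: "a \<in> Iset k1" and b: "b \<in> Iset k2" and ab: "a + b \<in> Iset k3"
    and k: "med3 k1 k2 k3 + 2 < max k1 (max k2 k3)"
  shows "\<bar>a\<bar> = 2 * 2 powr k1 \<or> \<bar>b\<bar> = 2 * 2 powr k2"
proof -
  have sep: "8 * (2::real) powr x \<le> 2 powr y" if "x + 3 \<le> y" for x y :: int
    using powr_mono[of "x + 3" y 2] that by (simp add: powr_add)
  have tri: "\<bar>a + b\<bar> \<le> \<bar>a\<bar> + \<bar>b\<bar>" "\<bar>a\<bar> \<le> \<bar>b\<bar> + \<bar>a + b\<bar>" "\<bar>b\<bar> \<le> \<bar>a\<bar> + \<bar>a + b\<bar>"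
    by linarith+
  have "(k1 + 3 \<le> k3 \<and> k2 + 3 \<le> k3) \<or> (k2 + 3 \<le> k1 \<and> k3 + 3 \<le> k1) \<or> (k1 + 3 \<le> k2 \<and> k3 + 3 \<le> k2)"
    using k unfolding med3_def by (auto simp: max_def min_def split: if_splits)
  then consider "8 * 2 powr k1 \<le> 2 powr k3" "8 * 2 powr k2 \<le> 2 powr k3"
    | "8 * 2 powr k2 \<le> 2 powr k1" "8 * 2 powr k3 \<le> 2 powr k1"
    | "8 * 2 powr k1 \<le> 2 powr k2" "8 * 2 powr k3 \<le> 2 powr k2"
    using sep by blast
  then show ?thesis
  proof cases
    case 1
    then have "\<bar>a\<bar> = 2 * 2 powr k1" using tri a b ab unfolding Iset_iff by linarith
    then show ?thesis ..
  next
    case 2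
    then have "\<bar>b\<bar> = 2 * 2 powr k2" using tri a b ab unfolding Iset_iff by linarith
    then show ?thesis ..
  next
    case 3
    then have "\<bar>a\<bar> = 2 * 2 powr k1" using tri a b ab unfolding Iset_iff by linarith
    then show ?thesis ..
  qed
qed

lemma Dset_modulations:
  assumes "(\<xi>1, \<tau>1) \<in> Dset k1 j1" "(\<xi>2, \<tau>2) \<in> Dset k2 j2" "(\<xi>1 + \<xi>2, \<tau>1 + \<tau>2) \<in> Dset k3 j3"
  defines "T \<equiv> 2 powr real_of_int (min k1 (min k2 k3) + med3 k1 k2 k3)"
  obtains m1 m2 m3 r :: real where "m3 = m1 + m2 + r" and "T / 2 \<le> \<bar>r\<bar>" "\<bar>r\<bar> \<le> 8 * T"
    and "\<bar>m1\<bar> \<le> 2 * 2 powr j1 + 4" "\<bar>m2\<bar> \<le> 2 * 2 powr j2 + 4" "\<bar>m3\<bar> \<le> 2 * 2 powr j3 + 4"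
    and "1 \<le> j1 \<Longrightarrow> 2 powr j1 / 2 - 4 \<le> \<bar>m1\<bar>" "1 \<le> j2 \<Longrightarrow> 2 powr j2 / 2 - 4 \<le> \<bar>m2\<bar>"
      "1 \<le> j3 \<Longrightarrow> 2 powr j3 / 2 - 4 \<le> \<bar>m3\<bar>"
proof
  show "\<tau>1 + \<tau>2 - omega (\<xi>1 + \<xi>2)
      = (\<tau>1 - omega \<xi>1) + (\<tau>2 - omega \<xi>2) + (omega \<xi>1 + omega \<xi>2 - omega (\<xi>1 + \<xi>2))"
    by simp
  show "T / 2 \<le> \<bar>omega \<xi>1 + omega \<xi>2 - omega (\<xi>1 + \<xi>2)\<bar>" "\<bar>omega \<xi>1 + omega \<xi>2 - omega (\<xi>1 + \<xi>2)\<bar> \<le> 8 * T"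
    unfolding T_def using assms(1-3)
    by (intro abs_omega_resonance_bounds; simp add: Dset_modulation_bounds(1))+
qed (use Dset_modulation_bounds(2,3) assms(1-3) in simp)+

lemma max3_cases:
  fixes j1 j2 j3 :: nat
  obtains "max j1 (max j2 j3) = j1" "j2 \<le> med3 j1 j2 j3" "j3 \<le> med3 j1 j2 j3"
    | "max j1 (max j2 j3) = j2" "j1 \<le> med3 j1 j2 j3" "j3 \<le> med3 j1 j2 j3"
    | "max j1 (max j2 j3) = j3" "j1 \<le> med3 j1 j2 j3" "j2 \<le> med3 j1 j2 j3"
proof -
  have "max j1 (max j2 j3) = j1 \<and> j2 \<le> med3 j1 j2 j3 \<and> j3 \<le> med3 j1 j2 j3
    \<or> max j1 (max j2 j3) = j2 \<and> j1 \<le> med3 j1 j2 j3 \<and> j3 \<le> med3 j1 j2 j3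
    \<or> max j1 (max j2 j3) = j3 \<and> j1 \<le> med3 j1 j2 j3 \<and> j2 \<le> med3 j1 j2 j3"
    unfolding med3_def by (auto simp: max_def min_def)
  then show ?thesis using that by blast
qed

lemma Dset_modulation_not_low:
  assumes D: "(\<xi>1, \<tau>1) \<in> Dset k1 j1" "(\<xi>2, \<tau>2) \<in> Dset k2 j2" "(\<xi>1 + \<xi>2, \<tau>1 + \<tau>2) \<in> Dset k3 j3"
  defines "kt \<equiv> min k1 (min k2 k3) + med3 k1 k2 k3" and "jmax \<equiv> max j1 (max j2 j3)"
  shows "kt < int jmax + 9"
proof (rule ccontr)
  assume "\<not> kt < int jmax + 9"
  then have "512 * 2 powr jmax \<le> (2::real) powr kt"
    using powr_mono[of "jmax + 9" kt 2] by (simp add: powr_add)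
  moreover obtain m1 m2 m3 r where "m3 = m1 + m2 + r" "2 powr kt / 2 \<le> \<bar>r\<bar>"
    "\<bar>m1\<bar> \<le> 2 * 2 powr j1 + 4" "\<bar>m2\<bar> \<le> 2 * 2 powr j2 + 4" "\<bar>m3\<bar> \<le> 2 * 2 powr j3 + 4"
    by (rule Dset_modulations[OF D, folded kt_def]) blast
  moreover have "2 powr j1 \<le> (2::real) powr jmax" "2 powr j2 \<le> (2::real) powr jmax"
    "2 powr j3 \<le> (2::real) powr jmax" "1 \<le> (2::real) powr jmax"
    by (simp_all add: jmax_def ge_one_powr_ge_zero)
  ultimately show False by linarith
qed

lemma Dset_modulation_not_high:
  assumes D: "(\<xi>1, \<tau>1) \<in> Dset k1 j1" "(\<xi>2, \<tau>2) \<in> Dset k2 j2" "(\<xi>1 + \<xi>2, \<tau>1 + \<tau>2) \<in> Dset k3 j3"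
  defines "kt \<equiv> min k1 (min k2 k3) + med3 k1 k2 k3"
    and "jmax \<equiv> max j1 (max j2 j3)" and "jmed \<equiv> med3 j1 j2 j3"
  assumes high: "kt + 9 \<le> int jmax"
  shows "jmax < jmed + 11"
proof (rule ccontr)
  assume "\<not> jmax < jmed + 11"
  define Q D where "Q = (2::real) powr jmax" and "D = (2::real) powr jmed"
  have "512 * 2 powr kt \<le> Q" "2048 * D \<le> Q" "2048 \<le> Q"
    using powr_mono[of "kt + 9" jmax 2] powr_mono[of "jmed + 11" jmax 2] powr_mono[of 11 jmax 2]
      high \<open>\<not> jmax < jmed + 11\<close>
    by (simp_all add: Q_def D_def powr_add)
  moreover obtain m1 m2 m3 r where "m3 = m1 + m2 + r" "\<bar>r\<bar> \<le> 8 * 2 powr kt"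
    and up: "\<bar>m1\<bar> \<le> 2 * 2 powr j1 + 4" "\<bar>m2\<bar> \<le> 2 * 2 powr j2 + 4" "\<bar>m3\<bar> \<le> 2 * 2 powr j3 + 4"
    and lo: "1 \<le> j1 \<Longrightarrow> 2 powr j1 / 2 - 4 \<le> \<bar>m1\<bar>" "1 \<le> j2 \<Longrightarrow> 2 powr j2 / 2 - 4 \<le> \<bar>m2\<bar>"
      "1 \<le> j3 \<Longrightarrow> 2 powr j3 / 2 - 4 \<le> \<bar>m3\<bar>"
    by (rule Dset_modulations[OF D, folded kt_def]) blast
  moreover have "Q / 2 - 4 \<le> \<bar>m1\<bar> \<and> \<bar>m2\<bar> \<le> 2 * D + 4 \<and> \<bar>m3\<bar> \<le> 2 * D + 4
    \<or> Q / 2 - 4 \<le> \<bar>m2\<bar> \<and> \<bar>m1\<bar> \<le> 2 * D + 4 \<and> \<bar>m3\<bar> \<le> 2 * D + 4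
    \<or> Q / 2 - 4 \<le> \<bar>m3\<bar> \<and> \<bar>m1\<bar> \<le> 2 * D + 4 \<and> \<bar>m2\<bar> \<le> 2 * D + 4"
  proof -
    have "1 \<le> jmax" using \<open>\<not> jmax < jmed + 11\<close> by linarith
    have D: "2 powr j \<le> D" if "j \<le> jmed" for j :: nat
      using that by (simp add: D_def)
    show ?thesis
    proof (cases rule: max3_cases[of j1 j2 j3])
      case 1
      then have "2 powr j1 = Q" "2 powr j2 \<le> D" "2 powr j3 \<le> D" "1 \<le> j1"
        using D \<open>1 \<le> jmax\<close> by (simp_all add: Q_def jmax_def jmed_def)
      then show ?thesis
        using lo(1) up(2,3) by (intro disjI1 conjI) simp_all
    next
      case 2
      then have "2 powr j2 = Q" "2 powr j1 \<le> D" "2 powr j3 \<le> D" "1 \<le> j2"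
        using D \<open>1 \<le> jmax\<close> by (simp_all add: Q_def jmax_def jmed_def)
      then show ?thesis
        using lo(2) up(1,3) by (intro disjI2 disjI1 conjI) simp_all
    next
      case 3
      then have "2 powr j3 = Q" "2 powr j1 \<le> D" "2 powr j2 \<le> D" "1 \<le> j3"
        using D \<open>1 \<le> jmax\<close> by (simp_all add: Q_def jmax_def jmed_def)
      then show ?thesis
        using lo(3) up(1,2) by (intro disjI2 conjI) simp_all
    qed
  qed
  ultimately show False by linarith
qed

lemma Dset_modulation_constraint:
  assumes "(\<xi>1, \<tau>1) \<in> Dset k1 j1" "(\<xi>2, \<tau>2) \<in> Dset k2 j2" "(\<xi>1 + \<xi>2, \<tau>1 + \<tau>2) \<in> Dset k3 j3"
  defines "kt \<equiv> min k1 (min k2 k3) + med3 k1 k2 k3"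
    and "jmax \<equiv> max j1 (max j2 j3)" and "jmed \<equiv> med3 j1 j2 j3"
  shows "kt - 8 \<le> int jmax \<and> int jmax \<le> kt + 8 \<or> kt + 8 \<le> int jmax \<and> jmax - jmed \<le> 10"
  using Dset_modulation_not_low[OF assms(1-3)] Dset_modulation_not_high[OF assms(1-3)]
  unfolding kt_def jmax_def jmed_def by linarith

lemma AE_fst_notin_finite:
  assumes "finite F"
  shows "AE y in (lborel :: (real \<times> real) measure). fst y \<notin> F"
proof -
  have "F \<in> null_sets lborel"
    using assms by (simp add: countable_imp_null_set_lborel countable_finite)
  then have "F \<times> UNIV \<in> null_sets (lborel \<Otimes>\<^sub>M (lborel :: real measure))"
    by (rule lborel.times_in_null_sets1) simp
  then show ?thesis
    by (intro AE_I'[of "F \<times> UNIV"]) (auto simp: lborel_prod)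
qed

lemma conv2_eq_0_if_fst_finite:
  assumes "finite F" and "\<And>y. f1 y * f2 (x - y) \<noteq> 0 \<Longrightarrow> fst y \<in> F"
  shows "conv2 f1 f2 x = 0"
  unfolding conv2_def
proof (rule integral_eq_zero_AE, rule AE_completion)
  show "AE y in lborel. f1 y * f2 (x - y) = 0"
    using AE_fst_notin_finite[OF assms(1)] by eventually_elim (use assms(2) in blast)
qed

section \<open>Estimates for the dyadic pieces\<close>

lemma sqrt_mult_powr_two_le: "0 \<le> c \<Longrightarrow> c \<le> 1600 \<Longrightarrow> sqrt (c * 2 powr e) \<le> 40 * 2 powr (e / 2)"
  using real_sqrt_le_mono[of c "40\<^sup>2"] by (simp add: real_sqrt_mult powr_half_sqrt_powr mult_right_mono)

lemma conv_L2_bounded_Dnbhd_min: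
  "conv_L2_bounded (Dnbhd k1 j1) (Dnbhd k2 j2) (Dnbhd k3 j3)
    (48 * 2 powr (real (min j1 (min j2 j3)) + real_of_int (min k1 (min k2 k3))))"
proof -
  \<comment> \<open>Some pair contains both an index of minimal \<open>j\<close> and one of minimal \<open>k\<close>.\<close>
  have "min j1 j2 = min j1 (min j2 j3) \<and> min k1 k2 = min k1 (min k2 k3)
    \<or> min j1 j3 = min j1 (min j2 j3) \<and> min k1 k3 = min k1 (min k2 k3)
    \<or> min j2 j3 = min j1 (min j2 j3) \<and> min k2 k3 = min k1 (min k2 k3)"
    by (auto simp: min_def)
  moreover have "((k1, j1), (k2, j2), (k3, j3)) \<in> pair_splits (k1, j1) (k2, j2) (k3, j3)"
    "((k1, j1), (k3, j3), (k2, j2)) \<in> pair_splits (k1, j1) (k2, j2) (k3, j3)"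
    "((k2, j2), (k3, j3), (k1, j1)) \<in> pair_splits (k1, j1) (k2, j2) (k3, j3)"
    by (simp_all add: pair_splits_def)
  ultimately show ?thesis
    using conv_L2_bounded_Dnbhd_size by metis
qed

lemma med3_of_max_cases:
  fixes j1 j2 j3 :: nat
  obtains "max j1 (max j2 j3) = j1" "med3 j1 j2 j3 = max j2 j3" "min j1 (min j2 j3) = min j2 j3"
    | "max j1 (max j2 j3) = j2" "med3 j1 j2 j3 = max j1 j3" "min j1 (min j2 j3) = min j1 j3"
    | "max j1 (max j2 j3) = j3" "med3 j1 j2 j3 = max j1 j2" "min j1 (min j2 j3) = min j1 j2"
proof -
  have "max j1 (max j2 j3) = j1 \<and> med3 j1 j2 j3 = max j2 j3 \<and> min j1 (min j2 j3) = min j2 j3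
    \<or> max j1 (max j2 j3) = j2 \<and> med3 j1 j2 j3 = max j1 j3 \<and> min j1 (min j2 j3) = min j1 j3
    \<or> max j1 (max j2 j3) = j3 \<and> med3 j1 j2 j3 = max j1 j2 \<and> min j1 (min j2 j3) = min j1 j2"
    unfolding med3_def by (auto simp: max_def min_def)
  then show ?thesis using that by blast
qed

lemma conv_L2_bounded_Dnbhd_med:
  "conv_L2_bounded (Dnbhd k1 j1) (Dnbhd k2 j2) (Dnbhd k3 j3)
    (660 * 2 powr (real (min j1 (min j2 j3)) + real (med3 j1 j2 j3) / 2))"
proof (cases "2 * real_of_int (min k1 (min k2 k3)) \<le> real (med3 j1 j2 j3)")
  case True
  have "(2::real) powr (real (min j1 (min j2 j3)) + real_of_int (min k1 (min k2 k3)))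
      \<le> 2 powr (real (min j1 (min j2 j3)) + real (med3 j1 j2 j3) / 2)"
    using True by (intro powr_mono) auto
  then have "48 * (2::real) powr (real (min j1 (min j2 j3)) + real_of_int (min k1 (min k2 k3)))
      \<le> 660 * 2 powr (real (min j1 (min j2 j3)) + real (med3 j1 j2 j3) / 2)"
    using powr_ge_zero[of 2 "real (min j1 (min j2 j3)) + real (med3 j1 j2 j3) / 2"] by linarith
  then show ?thesis
    by (rule conv_L2_bounded_mono[OF conv_L2_bounded_Dnbhd_min])
next
  case False
  then have small: "real (med3 j1 j2 j3) \<le> 2 * real_of_int k" if "k \<in> {k1, k2, k3}" for k
    using that by auto
  show ?thesis
  proof (cases rule: med3_of_max_cases[of j1 j2 j3])
    case 1
    then show ?thesis
      using conv_L2_bounded_Dnbhd_sqrt[of k2 j2 k3 j3 k1 j1 k1 j1 k2 j2 k3 j3] small[of k1]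
      by (simp add: pair_splits_def)
  next
    case 2
    then show ?thesis
      using conv_L2_bounded_Dnbhd_sqrt[of k1 j1 k3 j3 k2 j2 k1 j1 k2 j2 k3 j3] small[of k2]
      by (simp add: pair_splits_def)
  next
    case 3
    then show ?thesis
      using conv_L2_bounded_Dnbhd_sqrt[of k1 j1 k2 j2 k3 j3 k1 j1 k2 j2 k3 j3] small[of k3]
      by (simp add: pair_splits_def)
  qed
qed

context
  fixes f1 f2 :: "real \<times> real \<Rightarrow> complex" and k1 k2 k3 :: int and j1 j2 j3 :: nat
  assumes f1: "is_L2 f1" "\<forall>x. x \<notin> Dset k1 j1 \<longrightarrow> f1 x = 0"
    and f2: "is_L2 f2" "\<forall>x. x \<notin> Dset k2 j2 \<longrightarrow> f2 x = 0"
begin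

lemma L2norm_restricted_conv_le:
  assumes "conv_L2_bounded (Dnbhd k1 j1) (Dnbhd k2 j2) (Dnbhd k3 j3) (c * 2 powr e)" "0 \<le> c" "c \<le> 1600"
  shows "L2norm (\<lambda>x. indicator (Dset k3 j3) x * conv2 f1 f2 x) \<le> 40 * 2 powr (e / 2) * (L2norm f1 * L2norm f2)"
proof -
  have "\<forall>x. x \<notin> Dnbhd k1 j1 \<longrightarrow> f1 x = 0" "\<forall>x. x \<notin> Dnbhd k2 j2 \<longrightarrow> f2 x = 0"
    using f1(2) f2(2) Dset_subset_thick_parabola by blast+
  then have "L2norm (\<lambda>x. indicator (Dset k3 j3) x * conv2 f1 f2 x) \<le> sqrt (c * 2 powr e) * L2norm f1 * L2norm f2"
    using f1(1) f2(1) Dset_subset_thick_parabola assms(1,2)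
    by (intro L2norm_indicator_conv2_le) simp_all
  also have "\<dots> \<le> 40 * 2 powr (e / 2) * (L2norm f1 * L2norm f2)"
  proof -
    have "0 \<le> L2norm f1 * L2norm f2" by (simp add: L2norm_def)
    from mult_right_mono[OF sqrt_mult_powr_two_le[OF assms(2,3)] this] show ?thesis
      by (simp add: mult.assoc)
  qed
  finally show ?thesis .
qed

lemma conv2_eq_0_outside_interaction:
  assumes x: "x \<in> Dset k3 j3"
    and no: "\<not> (max k1 (max k2 k3) \<le> med3 k1 k2 k3 + 2 \<and>
      ((min k1 (min k2 k3) + med3 k1 k2 k3 - 8 \<le> int (max j1 (max j2 j3))
         \<and> int (max j1 (max j2 j3)) \<le> min k1 (min k2 k3) + med3 k1 k2 k3 + 8)
       \<or> (int (max j1 (max j2 j3)) \<ge> min k1 (min k2 k3) + med3 k1 k2 k3 + 8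
         \<and> max j1 (max j2 j3) - med3 j1 j2 j3 \<le> 10)))"
  shows "conv2 f1 f2 x = 0"
proof (rule conv2_eq_0_if_fst_finite)
  show "finite {2 * 2 powr k1, - (2 * 2 powr k1), fst x - 2 * 2 powr k2, fst x + 2 * 2 powr k2}"
    by simp
  fix y assume "f1 y * f2 (x - y) \<noteq> 0"
  then have y: "y \<in> Dset k1 j1" and xy: "x - y \<in> Dset k2 j2"
    using f1(2) f2(2) mult_zero_left mult_zero_right by metis+
  obtain \<xi> \<tau> where xe: "x = (\<xi>, \<tau>)" by fastforce
  obtain \<xi>1 \<tau>1 where ye: "y = (\<xi>1, \<tau>1)" by fastforce
  have D: "(\<xi>1, \<tau>1) \<in> Dset k1 j1" "(\<xi> - \<xi>1, \<tau> - \<tau>1) \<in> Dset k2 j2"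
    "(\<xi>1 + (\<xi> - \<xi>1), \<tau>1 + (\<tau> - \<tau>1)) \<in> Dset k3 j3"
    using x y xy by (simp_all add: xe ye)
  show "fst y \<in> {2 * 2 powr k1, - (2 * 2 powr k1), fst x - 2 * 2 powr k2, fst x + 2 * 2 powr k2}"
  proof (cases "max k1 (max k2 k3) \<le> med3 k1 k2 k3 + 2")
    case True
    with no Dset_modulation_constraint[OF D] show ?thesis by auto
  next
    case False
    then have "\<bar>\<xi>1\<bar> = 2 * 2 powr k1 \<or> \<bar>\<xi> - \<xi>1\<bar> = 2 * 2 powr k2"
      using D Dset_modulation_bounds(1) by (intro Iset_add_boundary) auto
    then show ?thesis
      by (auto simp: xe ye abs_if split: if_splits)
  qed
qed

lemma restricted_conv2_AE_eq_0:
  assumes "\<not> (max k1 (max k2 k3) \<le> med3 k1 k2 k3 + 2 \<and>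
      ((min k1 (min k2 k3) + med3 k1 k2 k3 - 8 \<le> int (max j1 (max j2 j3))
         \<and> int (max j1 (max j2 j3)) \<le> min k1 (min k2 k3) + med3 k1 k2 k3 + 8)
       \<or> (int (max j1 (max j2 j3)) \<ge> min k1 (min k2 k3) + med3 k1 k2 k3 + 8
         \<and> max j1 (max j2 j3) - med3 j1 j2 j3 \<le> 10)))"
  shows "AE x in lebesgue. indicator (Dset k3 j3) x * conv2 f1 f2 x = 0"
proof (rule AE_I2)
  fix x
  show "indicator (Dset k3 j3) x * conv2 f1 f2 x = 0"
    using conv2_eq_0_outside_interaction[OF _ assms, of x] by (cases "x \<in> Dset k3 j3") simp_all
qed

lemma L2norm_restricted_conv_le_min:
  "L2norm (\<lambda>x. indicator (Dset k3 j3) x * conv2 f1 f2 x)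
    \<le> 40 * 2 powr (real_of_int (min k1 (min k2 k3)) / 2) * 2 powr (real (min j1 (min j2 j3)) / 2)
      * (L2norm f1 * L2norm f2)"
proof -
  have "L2norm (\<lambda>x. indicator (Dset k3 j3) x * conv2 f1 f2 x)
      \<le> 40 * 2 powr ((real (min j1 (min j2 j3)) + real_of_int (min k1 (min k2 k3))) / 2)
        * (L2norm f1 * L2norm f2)"
    by (rule L2norm_restricted_conv_le[OF conv_L2_bounded_Dnbhd_min]) simp_all
  also have "40 * 2 powr ((real (min j1 (min j2 j3)) + real_of_int (min k1 (min k2 k3))) / 2)
      = 40 * 2 powr (real_of_int (min k1 (min k2 k3)) / 2) * 2 powr (real (min j1 (min j2 j3)) / 2)"
    by (simp add: add_divide_distrib powr_add)
  finally show ?thesis .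
qed

lemma L2norm_restricted_conv_le_gap:
  assumes split: "((ka, ja), (kb, jb), (kc, jc)) \<in> pair_splits (k1, j1) (k2, j2) (k3, j3)"
    and spread: "max k1 (max k2 k3) \<ge> min k1 (min k2 k3) + 5"
  shows "L2norm (\<lambda>x. indicator (Dset k3 j3) x * conv2 f1 f2 x)
    \<le> 40 * 2 powr ((real j1 + real j2 + real j3) / 2) * 2 powr (- (real jc + real_of_int kc) / 2)
      * (L2norm f1 * L2norm f2)"
proof -
  have "L2norm (\<lambda>x. indicator (Dset k3 j3) x * conv2 f1 f2 x)
      \<le> 40 * 2 powr ((real ja + real jb - real_of_int kc) / 2) * (L2norm f1 * L2norm f2)"
    by (rule L2norm_restricted_conv_le[OF conv_L2_bounded_Dnbhd_gap[OF split spread]]) simp_all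
  also have "(real ja + real jb - real_of_int kc) / 2
      = (real j1 + real j2 + real j3) / 2 + - (real jc + real_of_int kc) / 2"
    using split by (auto simp: pair_splits_def field_simps)
  finally show ?thesis
    by (simp only: powr_add mult.assoc)
qed

lemma L2norm_restricted_conv_le_med:
  "L2norm (\<lambda>x. indicator (Dset k3 j3) x * conv2 f1 f2 x)
    \<le> 40 * 2 powr (real (min j1 (min j2 j3)) / 2 + real (med3 j1 j2 j3) / 4) * (L2norm f1 * L2norm f2)"
proof -
  have "L2norm (\<lambda>x. indicator (Dset k3 j3) x * conv2 f1 f2 x)
      \<le> 40 * 2 powr ((real (min j1 (min j2 j3)) + real (med3 j1 j2 j3) / 2) / 2) * (L2norm f1 * L2norm f2)"
    by (rule L2norm_restricted_conv_le[OF conv_L2_bounded_Dnbhd_med]) simp_all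
  then show ?thesis
    by (simp add: add_divide_distrib)
qed

end

theorem corollary6p2:
  "\<exists>C::real. \<forall>(k1::int) (k2::int) (k3::int) (j1::nat) (j2::nat) (j3::nat)
      (f1::real \<times> real \<Rightarrow> complex) (f2::real \<times> real \<Rightarrow> complex).
    is_L2 f1 \<and> is_L2 f2 \<and>
    (\<forall>x. x \<notin> Dset k1 j1 \<longrightarrow> f1 x = 0) \<and> (\<forall>x. x \<notin> Dset k2 j2 \<longrightarrow> f2 x = 0) \<longrightarrow>
    (let F = (\<lambda>x. indicator (Dset k3 j3) x * conv2 f1 f2 x);
         N = L2norm f1 * L2norm f2;
         kmin = min k1 (min k2 k3); kmax = max k1 (max k2 k3); kmed = med3 k1 k2 k3;
         jmin = min j1 (min j2 j3); jmax = max j1 (max j2 j3); jmed = med3 j1 j2 j3;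
         kt = kmin + kmed;
         S = real j1 + real j2 + real j3
     in
      L2norm F \<le> C * 2 powr (real_of_int kmin / 2) * 2 powr (real jmin / 2) * N
    \<and> (kmax \<ge> kmin + 5 \<longrightarrow>
         L2norm F \<le> C * 2 powr (S / 2) * 2 powr (- (real j1 + real_of_int k1) / 2) * N
       \<and> L2norm F \<le> C * 2 powr (S / 2) * 2 powr (- (real j2 + real_of_int k2) / 2) * N
       \<and> L2norm F \<le> C * 2 powr (S / 2) * 2 powr (- (real j3 + real_of_int k3) / 2) * N)
    \<and> L2norm F \<le> C * 2 powr (real jmin / 2 + real jmed / 4) * N
    \<and> (\<not> (kmax \<le> kmed + 2 \<and>
           ((kt - 8 \<le> int jmax \<and> int jmax \<le> kt + 8)
            \<or> (int jmax \<ge> kt + 8 \<and> jmax - jmed \<le> 10)))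
        \<longrightarrow> (AE x in lebesgue. F x = 0)))"
  apply (intro exI[of _ 40] allI impI)
  subgoal premises prems for k1 k2 k3 j1 j2 j3 f1 f2
  proof -
    from prems have f1: "is_L2 f1" "\<forall>x. x \<notin> Dset k1 j1 \<longrightarrow> f1 x = 0"
      and f2: "is_L2 f2" "\<forall>x. x \<notin> Dset k2 j2 \<longrightarrow> f2 x = 0"
      by auto
    have splits: "((k2, j2), (k3, j3), (k1, j1)) \<in> pair_splits (k1, j1) (k2, j2) (k3, j3)"
      "((k1, j1), (k3, j3), (k2, j2)) \<in> pair_splits (k1, j1) (k2, j2) (k3, j3)"
      "((k1, j1), (k2, j2), (k3, j3)) \<in> pair_splits (k1, j1) (k2, j2) (k3, j3)"
      by (simp_all add: pair_splits_def)
    show ?thesis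
      unfolding Let_def
      by (intro conjI impI L2norm_restricted_conv_le_min[OF f1 f2] L2norm_restricted_conv_le_med[OF f1 f2]
          L2norm_restricted_conv_le_gap[OF f1 f2 splits(1)] L2norm_restricted_conv_le_gap[OF f1 f2 splits(2)]
          L2norm_restricted_conv_le_gap[OF f1 f2 splits(3)] restricted_conv2_AE_eq_0[OF f1 f2])
  qed
  done

end
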